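(* Let $d_1,d_2\ge 2$ and let $\rho$ be a separable state on $\mathbb{C}^{d_1}\otimes\mathbb{C}^{d_2}$, written in Bloch form \[ \rho=\frac{1}{d_1d_2}I_{d_1}\otimes I_{d_2}+\sum_{i=1}^{d_1^2-1}r_i\lambda_i^{(d_1)}\otimes I_{d_2}+\sum_{j=1}^{d_2^2-1}s_j I_{d_1}\otimes\lambda_j^{(d_2)}+\sum_{i=1}^{d_1^2-1}\sum_{j=1}^{d_2^2-1}T_{ij}\lambda_i^{(d_1)}\otimes\lambda_j^{(d_2)}. \] Let $a_k={\rm Tr}\big((TT^{\dagger})^{k/2}\big)$ and $b_k={\rm Tr}\big((\tilde T\tilde T^{\dagger})^{k/2}\big)$. Then \[ a_2^2\le \frac{\sqrt{(d_1^2-d_1)(d_2^2-d_2)}}{2d_1d_2}\,a_3, \qquad b_2^2\le \frac{\sqrt{(2+d_1^2-d_1)(2+d_2^2-d_2)}}{2d_1d_2}\,b_3 . \]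
   Context: For $d\ge2$, $\lambda_1^{(d)},\dots,\lambda_{d^2-1}^{(d)}$ are traceless Hermitian generators of $\mathfrak{su}(d)$ with ${\rm Tr}(\lambda_i^{(d)}\lambda_j^{(d)})=2\delta_{ij}$. The Bloch coefficients of a state $\rho$ on $\mathbb{C}^{d_1}\otimes\mathbb{C}^{d_2}$ are $r_i=\frac{1}{2d_2}{\rm Tr}(\rho\,\lambda_i^{(d_1)}\otimes I_{d_2})$, $s_j=\frac{1}{2d_1}{\rm Tr}(\rho\, I_{d_1}\otimes\lambda_j^{(d_2)})$, $T_{ij}=\frac14{\rm Tr}(\rho\,\lambda_i^{(d_1)}\otimes\lambda_j^{(d_2)})$. The correlation matrix is $T=(T_{ij})$, of size $(d_1^2-1)\times(d_2^2-1)$. With $\mathbf r=(r_1,\dots,r_{d_1^2-1})^t$ and $\mathbf s=(s_1,\dots,s_{d_2^2-1})^t$, the canonical correlation matrix is the $d_1^2\times d_2^2$ matrix $\tilde T=\begin{pmatrix}\frac{1}{d_1d_2}&\mathbf s^t\\ \mathbf r& T\end{pmatrix}$. A state is separable if it is a convex combination of product states $\rho_A\otimes\rho_B$. *)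

theory Defs
  imports "Jordan_Normal_Form.Schur_Decomposition"
begin

definition mtrace :: "complex mat \<Rightarrow> complex" where
  "mtrace A = (\<Sum>i<dim_row A. A $$ (i, i))"

definition kron :: "complex mat \<Rightarrow> complex mat \<Rightarrow> complex mat" where
  "kron A B = mat (dim_row A * dim_row B) (dim_col A * dim_col B)
     (\<lambda>(i, j). A $$ (i div dim_row B, j div dim_col B) * B $$ (i mod dim_row B, j mod dim_col B))"

definition hermitian :: "complex mat \<Rightarrow> bool" where
  "hermitian A \<longleftrightarrow> mat_adjoint A = A"

definition psd :: "nat \<Rightarrow> complex mat \<Rightarrow> bool" where
  "psd n A \<longleftrightarrow> A \<in> carrier_mat n n \<and> hermitian A \<and>
     (\<forall>v \<in> carrier_vec n. 0 \<le> Re ((A *\<^sub>v v) \<bullet>c v))"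

definition is_state :: "nat \<Rightarrow> complex mat \<Rightarrow> bool" where
  "is_state n \<rho> \<longleftrightarrow> psd n \<rho> \<and> mtrace \<rho> = 1"

definition separable :: "nat \<Rightarrow> nat \<Rightarrow> complex mat \<Rightarrow> bool" where
  "separable d1 d2 \<rho> \<longleftrightarrow>
     (\<exists>(m::nat) (p::nat \<Rightarrow> real) A B.
        (\<forall>k<m. 0 \<le> p k \<and> is_state d1 (A k) \<and> is_state d2 (B k)) \<and>
        (\<Sum>k<m. p k) = 1 \<and>
        \<rho> = mat (d1 * d2) (d1 * d2)
               (\<lambda>ij. \<Sum>k<m. complex_of_real (p k) * kron (A k) (B k) $$ ij))"

definition su_generators :: "nat \<Rightarrow> (nat \<Rightarrow> complex mat) \<Rightarrow> bool" where
  "su_generators d L \<longleftrightarrow>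
     (\<forall>i < d^2 - 1. L i \<in> carrier_mat d d \<and> hermitian (L i) \<and> mtrace (L i) = 0 \<and>
        (\<forall>j < d^2 - 1. mtrace (L i * L j) = (if i = j then 2 else 0)))"

text \<open>Bloch coefficients (indices shifted to start at 0).\<close>
definition bloch_r :: "nat \<Rightarrow> nat \<Rightarrow> (nat \<Rightarrow> complex mat) \<Rightarrow> complex mat \<Rightarrow> nat \<Rightarrow> complex" where
  "bloch_r d1 d2 L1 \<rho> i = mtrace (\<rho> * kron (L1 i) (1\<^sub>m d2)) / (2 * of_nat d2)"

definition bloch_s :: "nat \<Rightarrow> nat \<Rightarrow> (nat \<Rightarrow> complex mat) \<Rightarrow> complex mat \<Rightarrow> nat \<Rightarrow> complex" where
  "bloch_s d1 d2 L2 \<rho> j = mtrace (\<rho> * kron (1\<^sub>m d1) (L2 j)) / (2 * of_nat d1)"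

definition corr_mat :: "nat \<Rightarrow> nat \<Rightarrow> (nat \<Rightarrow> complex mat) \<Rightarrow> (nat \<Rightarrow> complex mat) \<Rightarrow> complex mat \<Rightarrow> complex mat" where
  "corr_mat d1 d2 L1 L2 \<rho> = mat (d1^2 - 1) (d2^2 - 1)
     (\<lambda>(i, j). mtrace (\<rho> * kron (L1 i) (L2 j)) / 4)"

text \<open>Canonical correlation matrix T~ = [[1/(d1 d2), s^t], [r, T]], of size d1^2 x d2^2.\<close>
definition canon_corr_mat :: "nat \<Rightarrow> nat \<Rightarrow> (nat \<Rightarrow> complex mat) \<Rightarrow> (nat \<Rightarrow> complex mat) \<Rightarrow> complex mat \<Rightarrow> complex mat" where
  "canon_corr_mat d1 d2 L1 L2 \<rho> = mat (d1^2) (d2^2)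
     (\<lambda>(i, j). if i = 0 \<and> j = 0 then 1 / (of_nat d1 * of_nat d2)
              else if i = 0 then bloch_s d1 d2 L2 \<rho> (j - 1)
              else if j = 0 then bloch_r d1 d2 L1 \<rho> (i - 1)
              else corr_mat d1 d2 L1 L2 \<rho> $$ (i - 1, j - 1))"

definition psd_sqrt :: "complex mat \<Rightarrow> complex mat" where
  "psd_sqrt A = (THE B. psd (dim_row A) B \<and> B * B = A)"

text \<open>Ky-Fan type quantity Tr((M M^dagger)^(k/2)), with (X)^(k/2) = (X^(1/2))^k.\<close>
definition tr_half_pow :: "complex mat \<Rightarrow> nat \<Rightarrow> real" where
  "tr_half_pow M k = Re (mtrace (psd_sqrt (M * mat_adjoint M) ^\<^sub>m k))"

end

(*
  Write the separable state as rho = sum_k p_k A_k (x) B_k with local states A_k, B_k.  Each entry of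
  the correlation matrix is then a mixture of products, T = sum_k p_k x_k y_k^t, where x_k and y_k are
  the Bloch vectors tr (A_k lambda_i) / 2 and tr (B_k lambda_j) / 2; the canonical correlation matrix is
  the same mixture of the extended vectors (1/d1, x_k) and (1/d2, y_k).  Purity tr (A^2) <= 1 and
  Bessel's inequality for the Hilbert-Schmidt orthogonal family {lambda_i, I} give
  |x_k|^2 <= (d^2 - d) / (2 d^2), hence |(1/d, x_k)|^2 <= (2 + d^2 - d) / (2 d^2).  The trace norm a_1
  is subadditive and equals |x| |y| on the rank-one matrix x y^t, so a_1 is at most the square root of
  the product of the two bounds.  Finally, with s_i the singular values, Cauchy-Schwarz gives
  a_2^2 = (sum s_i^2)^2 <= (sum s_i) (sum s_i^3) = a_1 a_3.

  The square root in a_k is a definite description, so evaluating a_k = sum s_i^k needs the spectral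
  theorem (here from a unitary Schur decomposition) and uniqueness of positive semidefinite square roots.
*)

theory Submission
  imports Defs "HOL-Analysis.L2_Norm"
begin

lemma sum_lessThan_mult:
  fixes g :: "nat \<Rightarrow> 'a::comm_monoid_add"
  shows "(\<Sum>i<n * m. g i) = (\<Sum>a<n. \<Sum>b<m. g (a * m + b))"
proof -
  have "(\<Sum>i<n * m. g i) = (\<Sum>a<n. \<Sum>i\<in>{a * m..<a * m + m}. g i)"
    by (rule sum.nat_group[of g m n, symmetric])
  also have "\<dots> = (\<Sum>a<n. \<Sum>b<m. g (a * m + b))"
    using sum.shift_bounds_nat_ivl[of g 0 "a * m" m for a] by (simp add: atLeast0LessThan add.commute)
  finally show ?thesis .
qed

lemma cmod_sum_mult_le:
  fixes a b :: "'i \<Rightarrow> complex"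
  shows "cmod (\<Sum>i\<in>I. a i * b i) \<le> sqrt (\<Sum>i\<in>I. (cmod (a i))\<^sup>2) * sqrt (\<Sum>i\<in>I. (cmod (b i))\<^sup>2)"
proof -
  have "cmod (\<Sum>i\<in>I. a i * b i) \<le> (\<Sum>i\<in>I. \<bar>cmod (a i)\<bar> * \<bar>cmod (b i)\<bar>)"
    by (rule order_trans[OF norm_sum]) (simp add: norm_mult)
  also have "\<dots> \<le> L2_set (\<lambda>i. cmod (a i)) I * L2_set (\<lambda>i. cmod (b i)) I"
    by (rule L2_set_mult_ineq)
  finally show ?thesis
    by (simp add: L2_set_def)
qed

lemma sum_expansion_mult_cnj:
  fixes a y :: "_ \<Rightarrow> complex"
  shows "(\<Sum>j\<in>J. (\<Sum>i\<in>I. a i * f i j) * cnj (y j)) = (\<Sum>i\<in>I. a i * cnj (\<Sum>j\<in>J. y j * cnj (f i j)))"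
proof -
  have "(\<Sum>j\<in>J. (\<Sum>i\<in>I. a i * f i j) * cnj (y j)) = (\<Sum>j\<in>J. \<Sum>i\<in>I. a i * (f i j * cnj (y j)))"
    by (simp add: sum_distrib_left sum_distrib_right mult_ac)
  also have "\<dots> = (\<Sum>i\<in>I. \<Sum>j\<in>J. a i * (f i j * cnj (y j)))"
    by (rule sum.swap)
  also have "\<dots> = (\<Sum>i\<in>I. a i * cnj (\<Sum>j\<in>J. y j * cnj (f i j)))"
    by (simp add: sum_distrib_left mult.commute)
  finally show ?thesis .
qed

lemma bessel_inequality:
  fixes x :: "'j \<Rightarrow> complex" and f :: "'i \<Rightarrow> 'j \<Rightarrow> complex"
  assumes "finite I"
    and orth: "\<And>i l. i \<in> I \<Longrightarrow> l \<in> I \<Longrightarrow> (\<Sum>j\<in>J. f i j * cnj (f l j)) = (if i = l then 1 else 0)"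
  shows "(\<Sum>i\<in>I. (cmod (\<Sum>j\<in>J. x j * cnj (f i j)))\<^sup>2) \<le> (\<Sum>j\<in>J. (cmod (x j))\<^sup>2)"
proof -
  define c where "c i = (\<Sum>j\<in>J. x j * cnj (f i j))" for i
  define P where "P j = (\<Sum>i\<in>I. c i * f i j)" for j
  define S where "S = (\<Sum>i\<in>I. c i * cnj (c i))"
  have P_x: "(\<Sum>j\<in>J. P j * cnj (x j)) = S"
    unfolding P_def sum_expansion_mult_cnj c_def S_def ..
  have P_f: "(\<Sum>j\<in>J. P j * cnj (f l j)) = c l" if "l \<in> I" for l
  proof -
    have "(\<Sum>j\<in>J. P j * cnj (f l j)) = (\<Sum>i\<in>I. c i * cnj (\<Sum>j\<in>J. f l j * cnj (f i j)))"
      unfolding P_def by (rule sum_expansion_mult_cnj)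
    also have "\<dots> = (\<Sum>i\<in>I. if i = l then c i else 0)"
      using that by (intro sum.cong refl) (auto simp: orth)
    finally show ?thesis
      using \<open>finite I\<close> that by simp
  qed
  have P_P: "(\<Sum>j\<in>J. P j * cnj (P j)) = S"
  proof -
    have "(\<Sum>j\<in>J. P j * cnj (P j)) = (\<Sum>i\<in>I. c i * cnj (\<Sum>j\<in>J. P j * cnj (f i j)))"
      by (subst (1) P_def) (rule sum_expansion_mult_cnj)
    then show ?thesis
      unfolding S_def using P_f by simp
  qed
  have "cnj S = S"
    by (simp add: S_def mult.commute)
  have "(\<Sum>j\<in>J. (x j - P j) * cnj (x j - P j))
      = (\<Sum>j\<in>J. x j * cnj (x j)) - cnj (\<Sum>j\<in>J. P j * cnj (x j)) - (\<Sum>j\<in>J. P j * cnj (x j))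
        + (\<Sum>j\<in>J. P j * cnj (P j))"
    by (simp add: sum.distrib sum_subtractf algebra_simps)
  also have "\<dots> = (\<Sum>j\<in>J. x j * cnj (x j)) - S"
    using P_x P_P \<open>cnj S = S\<close> by simp
  finally have "complex_of_real (\<Sum>j\<in>J. (cmod (x j - P j))\<^sup>2)
      = complex_of_real ((\<Sum>j\<in>J. (cmod (x j))\<^sup>2) - (\<Sum>i\<in>I. (cmod (c i))\<^sup>2))"
    unfolding S_def by (simp only: of_real_sum of_real_diff complex_norm_square)
  then have "(\<Sum>j\<in>J. (cmod (x j - P j))\<^sup>2) = (\<Sum>j\<in>J. (cmod (x j))\<^sup>2) - (\<Sum>i\<in>I. (cmod (c i))\<^sup>2)"
    by (simp only: of_real_eq_iff)
  moreover have "(\<Sum>j\<in>J. (cmod (x j - P j))\<^sup>2) \<ge> 0"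
    by (simp add: sum_nonneg)
  ultimately show ?thesis
    unfolding c_def by linarith
qed

section \<open>Adjoints, traces and unitary matrices\<close>

lemma dim_adjoint [simp]:
  "dim_row (mat_adjoint A) = dim_col A" "dim_col (mat_adjoint A) = dim_row A"
  unfolding mat_adjoint_def by auto

lemma index_adjoint [simp]:
  "i < dim_col A \<Longrightarrow> j < dim_row A \<Longrightarrow> mat_adjoint A $$ (i, j) = cnj (A $$ (j, i))"
  unfolding mat_adjoint_def by (auto simp: mat_of_rows_def)

lemma adjoint_carrier [simp]: "A \<in> carrier_mat n m \<Longrightarrow> mat_adjoint A \<in> carrier_mat m n"
  unfolding carrier_mat_def by simp

lemma adjoint_adjoint [simp]: "mat_adjoint (mat_adjoint A) = (A :: complex mat)"
  by (rule eq_matI) auto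

lemma adjoint_one [simp]: "mat_adjoint (1\<^sub>m n) = (1\<^sub>m n :: complex mat)"
  by (rule eq_matI) auto

lemma adjoint_mult:
  fixes A B :: "complex mat"
  assumes "A \<in> carrier_mat n m" and "B \<in> carrier_mat m k"
  shows "mat_adjoint (A * B) = mat_adjoint B * mat_adjoint A"
proof (rule eq_matI)
  fix i j assume "i < dim_row (mat_adjoint B * mat_adjoint A)" "j < dim_col (mat_adjoint B * mat_adjoint A)"
  then have i: "i < k" and j: "j < n" using assms by auto
  have "mat_adjoint (A * B) $$ (i, j) = cnj (\<Sum>l<m. A $$ (j, l) * B $$ (l, i))"
    using assms i j by (auto simp: scalar_prod_def atLeast0LessThan)
  also have "\<dots> = (\<Sum>l<m. cnj (B $$ (l, i)) * cnj (A $$ (j, l)))"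
    by (simp add: mult.commute)
  also have "\<dots> = (mat_adjoint B * mat_adjoint A) $$ (i, j)"
    using assms i j by (auto simp: scalar_prod_def atLeast0LessThan)
  finally show "mat_adjoint (A * B) $$ (i, j) = (mat_adjoint B * mat_adjoint A) $$ (i, j)" .
qed (use assms in auto)

lemma adjoint_minus:
  "A \<in> carrier_mat n m \<Longrightarrow> B \<in> carrier_mat n m \<Longrightarrow> mat_adjoint (A - B :: complex mat) = mat_adjoint A - mat_adjoint B"
  by (rule eq_matI) auto

lemma adjoint_four_block_mat:
  fixes A B C D :: "complex mat"
  assumes "A \<in> carrier_mat n1 m1" "B \<in> carrier_mat n1 m2" "C \<in> carrier_mat n2 m1" "D \<in> carrier_mat n2 m2"
  shows "mat_adjoint (four_block_mat A B C D) =
    four_block_mat (mat_adjoint A) (mat_adjoint C) (mat_adjoint B) (mat_adjoint D)"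
  by (rule eq_matI) (use assms in auto)

lemma adjoint_cscalar_prod:
  fixes A :: "complex mat"
  assumes "A \<in> carrier_mat n m" and "x \<in> carrier_vec m" and "y \<in> carrier_vec n"
  shows "(A *\<^sub>v x) \<bullet>c y = x \<bullet>c (mat_adjoint A *\<^sub>v y)"
proof -
  have "(A *\<^sub>v x) \<bullet>c y = (\<Sum>a<n. \<Sum>b<m. A $$ (a, b) * x $ b * cnj (y $ a))"
    using assms by (simp add: scalar_prod_def atLeast0LessThan sum_distrib_right sum_distrib_left mult_ac)
  also have "\<dots> = (\<Sum>b<m. \<Sum>a<n. A $$ (a, b) * x $ b * cnj (y $ a))"
    by (rule sum.swap)
  also have "\<dots> = x \<bullet>c (mat_adjoint A *\<^sub>v y)"
    using assms by (simp add: scalar_prod_def atLeast0LessThan sum_distrib_left mult_ac)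
  finally show ?thesis .
qed

lemma mtrace_mult_eq_sum:
  "A \<in> carrier_mat n m \<Longrightarrow> B \<in> carrier_mat m n \<Longrightarrow> mtrace (A * B) = (\<Sum>i<n. \<Sum>j<m. A $$ (i, j) * B $$ (j, i))"
  unfolding mtrace_def by (simp add: scalar_prod_def atLeast0LessThan)

lemma mtrace_mult_comm:
  assumes "A \<in> carrier_mat n m" and "B \<in> carrier_mat m n"
  shows "mtrace (A * B) = mtrace (B * A)"
proof -
  have "mtrace (A * B) = (\<Sum>i<n. \<Sum>k<m. A $$ (i, k) * B $$ (k, i))"
    by (rule mtrace_mult_eq_sum[OF assms])
  also have "\<dots> = (\<Sum>k<m. \<Sum>i<n. B $$ (k, i) * A $$ (i, k))"
    by (subst sum.swap) (simp add: mult.commute)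
  also have "\<dots> = mtrace (B * A)"
    by (rule mtrace_mult_eq_sum[OF assms(2,1), symmetric])
  finally show ?thesis .
qed

lemma mtrace_minus:
  "A \<in> carrier_mat n n \<Longrightarrow> B \<in> carrier_mat n n \<Longrightarrow> mtrace (A - B) = mtrace A - mtrace B"
  unfolding mtrace_def by (simp add: sum_subtractf)

lemma mtrace_one [simp]: "mtrace (1\<^sub>m d :: complex mat) = of_nat d"
  unfolding mtrace_def by simp

lemma cscalar_prod_self: "u \<bullet>c u = complex_of_real (\<Sum>i<dim_vec u. (cmod (u $ i))\<^sup>2)"
proof -
  have "u \<bullet>c u = (\<Sum>i<dim_vec u. u $ i * cnj (u $ i))"
    by (simp add: scalar_prod_def atLeast0LessThan)
  then show ?thesis
    by (simp only: complex_norm_square of_real_sum)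
qed

lemma cscalar_prod_smult:
  fixes u v :: "complex vec"
  assumes "dim_vec u = dim_vec v"
  shows "(a \<cdot>\<^sub>v u) \<bullet>c (b \<cdot>\<^sub>v v) = a * cnj b * (u \<bullet>c v)"
  unfolding scalar_prod_def using assms by (simp add: sum_distrib_left algebra_simps)

definition normalize_vec :: "complex vec \<Rightarrow> complex vec" where
  "normalize_vec v = complex_of_real (1 / sqrt (Re (v \<bullet>c v))) \<cdot>\<^sub>v v"

lemma normalize_vec_carrier [simp]: "v \<in> carrier_vec n \<Longrightarrow> normalize_vec v \<in> carrier_vec n"
  by (simp add: normalize_vec_def)

lemma normalize_vec_orthogonal:
  assumes "dim_vec u = dim_vec v" and "u \<bullet>c v = 0"
  shows "normalize_vec u \<bullet>c normalize_vec v = 0"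
  unfolding normalize_vec_def cscalar_prod_smult[OF assms(1)] assms(2) by simp

lemma normalize_vec_unit:
  assumes "v \<bullet>c v \<noteq> 0"
  shows "normalize_vec v \<bullet>c normalize_vec v = 1"
proof -
  define r where "r = (\<Sum>i<dim_vec v. (cmod (v $ i))\<^sup>2)"
  have vv: "v \<bullet>c v = complex_of_real r"
    unfolding r_def by (rule cscalar_prod_self)
  have "r \<noteq> 0"
    using assms vv by (metis of_real_0)
  moreover have "r \<ge> 0"
    unfolding r_def by (simp add: sum_nonneg)
  ultimately have r: "1 / sqrt r * (1 / sqrt r) * r = 1"
    by simp
  have "normalize_vec v \<bullet>c normalize_vec v
      = complex_of_real (1 / sqrt r) * cnj (complex_of_real (1 / sqrt r)) * complex_of_real r"
    unfolding normalize_vec_def cscalar_prod_smult[OF refl] vv Re_complex_of_real ..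
  also have "\<dots> = complex_of_real (1 / sqrt r * (1 / sqrt r) * r)"
    by (simp only: complex_cnj_complex_of_real of_real_mult)
  finally show ?thesis
    unfolding r by simp
qed

lemma normalize_vec_of_unit: "v \<bullet>c v = 1 \<Longrightarrow> normalize_vec v = v"
  by (simp add: normalize_vec_def)

definition unitary :: "nat \<Rightarrow> complex mat \<Rightarrow> bool" where
  "unitary n U \<longleftrightarrow> U \<in> carrier_mat n n \<and> mat_adjoint U * U = 1\<^sub>m n"

lemma unitaryD:
  assumes "unitary n U"
  shows "U \<in> carrier_mat n n" "mat_adjoint U \<in> carrier_mat n n"
    "mat_adjoint U * U = 1\<^sub>m n" "U * mat_adjoint U = 1\<^sub>m n"
  using assms mat_mult_left_right_inverse[of "mat_adjoint U" n U] by (auto simp: unitary_def)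

lemma unitary_mult:
  assumes "unitary n U" and "unitary n V"
  shows "unitary n (U * V)"
proof -
  note U = unitaryD[OF assms(1)] and V = unitaryD[OF assms(2)]
  have "mat_adjoint (U * V) * (U * V) = mat_adjoint V * ((mat_adjoint U * U) * V)"
    using U(1,2) V(1,2) by (simp add: adjoint_mult[of _ n n] assoc_mult_mat[of _ n n _ n _ n])
  also have "\<dots> = 1\<^sub>m n"
    using U V by simp
  finally have "mat_adjoint (U * V) * (U * V) = 1\<^sub>m n" .
  moreover have "U * V \<in> carrier_mat n n"
    using U V by simp
  ultimately show ?thesis
    by (simp add: unitary_def)
qed

lemma unitary_conj_cancel:
  assumes "unitary n U" and E: "E \<in> carrier_mat n n"
  shows "mat_adjoint U * (U * E * mat_adjoint U) * U = E"
proof -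
  note U = unitaryD[OF assms(1)]
  have "mat_adjoint U * (U * E * mat_adjoint U) * U = (mat_adjoint U * U) * E * (mat_adjoint U * U)"
    using U(1,2) E by (simp add: assoc_mult_mat[of _ n n _ n _ n] mult_carrier_mat[of _ n n])
  also have "\<dots> = E"
    using U(3) E by simp
  finally show ?thesis .
qed

lemma unitary_conj_mult:
  assumes "unitary n U" and D: "D \<in> carrier_mat n n" and E: "E \<in> carrier_mat n n"
  shows "(U * D * mat_adjoint U) * (U * E * mat_adjoint U) = U * (D * E) * mat_adjoint U"
proof -
  note U = unitaryD[OF assms(1)]
  have "(U * D * mat_adjoint U) * (U * E * mat_adjoint U) = U * D * (mat_adjoint U * U) * E * mat_adjoint U"
    using U(1,2) D E by (simp add: assoc_mult_mat[of _ n n _ n _ n] mult_carrier_mat[of _ n n])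
  also have "\<dots> = U * (D * E) * mat_adjoint U"
    using U D E by (simp add: assoc_mult_mat[of _ n n _ n _ n] mult_carrier_mat[of _ n n])
  finally show ?thesis .
qed

lemma mtrace_unitary_conj:
  assumes "unitary n U" and X: "X \<in> carrier_mat n n"
  shows "mtrace (U * X * mat_adjoint U) = mtrace X"
proof -
  note U = unitaryD[OF assms(1)]
  have "mtrace (U * X * mat_adjoint U) = mtrace (mat_adjoint U * (U * X))"
    using U X by (intro mtrace_mult_comm[of _ n n]) auto
  also have "mat_adjoint U * (U * X) = (mat_adjoint U * U) * X"
    using U(1,2) X by (simp add: assoc_mult_mat[of _ n n _ n _ n])
  finally show ?thesis
    using U(3) X by simp
qed

section \<open>The spectral theorem\<close>

lemma unit_eigenvector_exists:
  fixes A :: "complex mat"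
  assumes A: "A \<in> carrier_mat n n" and "n > 0"
  shows "\<exists>w e. w \<in> carrier_vec n \<and> w \<bullet>c w = 1 \<and> A *\<^sub>v w = e \<cdot>\<^sub>v w"
proof -
  obtain es where cp: "char_poly A = (\<Prod>a\<leftarrow>es. [:- a, 1:])" and "length es = n"
    using char_poly_factorized[OF A] by blast
  with \<open>n > 0\<close> obtain e es' where "es = e # es'"
    by (cases es) auto
  then have "poly (char_poly A) e = 0"
    unfolding cp by simp
  then obtain v where "eigenvector A v e"
    using eigenvalue_root_char_poly[OF A] unfolding eigenvalue_def by blast
  then have v: "v \<in> carrier_vec n" "v \<noteq> 0\<^sub>v n" "A *\<^sub>v v = e \<cdot>\<^sub>v v"
    using A unfolding eigenvector_def by auto
  define c where "c = complex_of_real (1 / sqrt (Re (v \<bullet>c v)))"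
  have "A *\<^sub>v normalize_vec v = (c * e) \<cdot>\<^sub>v v"
    unfolding normalize_vec_def c_def[symmetric] mult_mat_vec[OF A v(1)] v(3) smult_smult_assoc ..
  then have "A *\<^sub>v normalize_vec v = e \<cdot>\<^sub>v normalize_vec v"
    unfolding normalize_vec_def c_def[symmetric] smult_smult_assoc by (simp only: mult.commute)
  moreover have "normalize_vec v \<bullet>c normalize_vec v = 1"
    using v by (intro normalize_vec_unit) simp
  ultimately show ?thesis
    using normalize_vec_carrier[OF v(1)] by blast
qed

lemma unitary_mat_of_cols:
  assumes len: "length ws = n" and ws: "set ws \<subseteq> carrier_vec n"
    and orth: "\<And>i j. i < n \<Longrightarrow> j < n \<Longrightarrow> ws ! i \<bullet>c ws ! j = (if i = j then 1 else 0)"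
  shows "unitary n (mat_of_cols n ws)"
proof -
  let ?W = "mat_of_cols n ws"
  have W: "?W \<in> carrier_mat n n"
    using mat_of_cols_carrier(1)[of n ws] len by simp
  have "mat_adjoint ?W * ?W = 1\<^sub>m n"
  proof (rule eq_matI)
    fix i j assume "i < dim_row (1\<^sub>m n)" "j < dim_col (1\<^sub>m n)"
    then have i: "i < n" and j: "j < n"
      by auto
    then have "ws ! i \<in> carrier_vec n" and "ws ! j \<in> carrier_vec n"
      using len ws by auto
    then have "(mat_adjoint ?W * ?W) $$ (i, j) = ws ! j \<bullet>c ws ! i"
      using W i j len by (simp add: scalar_prod_def atLeast0LessThan mat_of_cols_index mult.commute)
    then show "(mat_adjoint ?W * ?W) $$ (i, j) = 1\<^sub>m n $$ (i, j)"
      using orth[OF j i] i j by auto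
  qed (use W in auto)
  then show ?thesis
    using W unfolding unitary_def by blast
qed

lemma unitary_with_first_col:
  assumes w: "w \<in> carrier_vec n" and w1: "w \<bullet>c w = 1"
  shows "\<exists>W. unitary n W \<and> col W 0 = w"
proof -
  interpret cof_vec_space n "TYPE(complex)" .
  have w0: "w \<noteq> 0\<^sub>v n"
    using w1 w by auto
  define b where "b = basis_completion w"
  from basis_completion[OF w w0, folded b_def]
  have b: "set b \<subseteq> carrier_vec n" "distinct b" "\<not> lin_dep (set b)" "length b = n" "hd b = w"
    by auto
  have "n > 0"
    using w w0 by (cases n) auto
  then obtain bs where bw: "b = w # bs"
    using b(4,5) by (cases b) auto
  define us where "us = gram_schmidt n b"
  from gram_schmidt_result[OF b(1-3) us_def]
  have us: "corthogonal us" "set us \<subseteq> carrier_vec n" "length us = n"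
    using b(4) by auto
  have us0: "us ! 0 = w"
    using gram_schmidt_hd[OF w, of bs] bw us_def \<open>n > 0\<close> us(3) by (metis hd_conv_nth list.size(3) not_less_zero)
  define ws where "ws = map normalize_vec us"
  have usi: "i < n \<Longrightarrow> us ! i \<in> carrier_vec n" for i
    using us by auto
  have "unitary n (mat_of_cols n ws)"
  proof (rule unitary_mat_of_cols)
    show "ws ! i \<bullet>c ws ! j = (if i = j then 1 else 0)" if "i < n" "j < n" for i j
      using that us usi[OF that(1)] usi[OF that(2)]
      by (auto simp: ws_def corthogonal_def intro!: normalize_vec_unit normalize_vec_orthogonal)
  qed (use us in \<open>auto simp: ws_def\<close>)
  moreover have "col (mat_of_cols n ws) 0 = w"
    using us(3) \<open>n > 0\<close> usi[of 0] us0 w1 by (simp add: ws_def normalize_vec_of_unit)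
  ultimately show ?thesis
    by blast
qed

lemma unitary_deflation:
  fixes A :: "complex mat"
  assumes A: "A \<in> carrier_mat (Suc m) (Suc m)"
  obtains W A1 A2 A3 where "unitary (Suc m) W"
    and "A1 \<in> carrier_mat 1 1" and "A2 \<in> carrier_mat 1 m" and "A3 \<in> carrier_mat m m"
    and "A = W * four_block_mat A1 A2 (0\<^sub>m m 1) A3 * mat_adjoint W"
proof -
  let ?n = "Suc m"
  obtain w e where w: "w \<in> carrier_vec ?n" "w \<bullet>c w = 1" "A *\<^sub>v w = e \<cdot>\<^sub>v w"
    using unit_eigenvector_exists[OF A] by auto
  obtain W where "unitary ?n W" and W0: "col W 0 = w"
    using unitary_with_first_col[OF w(1,2)] by blast
  note W = unitaryD[OF this(1)]
  define A' where "A' = mat_adjoint W * A * W"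
  have A': "A' \<in> carrier_mat ?n ?n"
    unfolding A'_def using A W by auto
  have "col A' 0 = (mat_adjoint W * A) *\<^sub>v col W 0"
    unfolding A'_def using A W by (intro col_mult2) auto
  also have "\<dots> = mat_adjoint W *\<^sub>v (e \<cdot>\<^sub>v w)"
    using A W w W0 by (simp add: assoc_mult_mat_vec[of _ ?n ?n _ ?n])
  also have "\<dots> = e \<cdot>\<^sub>v (mat_adjoint W *\<^sub>v col W 0)"
    using W(2) w W0 by (simp add: mult_mat_vec)
  also have "mat_adjoint W *\<^sub>v col W 0 = col (mat_adjoint W * W) 0"
    using W by (intro col_mult2[symmetric]) auto
  finally have col: "col A' 0 = e \<cdot>\<^sub>v unit_vec ?n 0"
    using W by simp
  obtain A1 A2 A0 A3 where sp: "split_block A' 1 1 = (A1, A2, A0, A3)"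
    by (cases "split_block A' 1 1") auto
  have dims: "dim_row A' = 1 + m" "dim_col A' = 1 + m"
    using A' by auto
  note blocks = split_block[OF sp dims]
  have "A' $$ (Suc i, 0) = col A' 0 $ Suc i" if "i < m" for i
    using A' that by simp
  then have "A' $$ (Suc i, 0) = 0" if "i < m" for i
    using col that by simp
  then have "A0 = 0\<^sub>m m 1"
    using sp dims unfolding split_block_def Let_def by (intro eq_matI) auto
  moreover have "(W * mat_adjoint W) * A * (W * mat_adjoint W) = W * A' * mat_adjoint W"
    unfolding A'_def using W(1,2) A
    by (simp add: assoc_mult_mat[of _ ?n ?n _ ?n _ ?n] mult_carrier_mat[of _ ?n ?n])
  ultimately show ?thesis
    using that[OF \<open>unitary ?n W\<close> blocks(1,2,4)] blocks(5) W A by simp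
qed

lemma unitary_one_block:
  assumes "unitary m U"
  shows "unitary (Suc m) (four_block_mat (1\<^sub>m 1) (0\<^sub>m 1 m) (0\<^sub>m m 1) U)"
proof -
  note U = unitaryD[OF assms]
  have "mat_adjoint (four_block_mat (1\<^sub>m 1) (0\<^sub>m 1 m) (0\<^sub>m m 1) U)
      = four_block_mat (1\<^sub>m 1) (0\<^sub>m 1 m) (0\<^sub>m m 1) (mat_adjoint U)"
    using U by (subst adjoint_four_block_mat[of _ 1 1 _ m _ m]) auto
  moreover have "four_block_mat (1\<^sub>m 1) (0\<^sub>m 1 m) (0\<^sub>m m 1) U \<in> carrier_mat (Suc m) (Suc m)"
    using four_block_carrier_mat[of "1\<^sub>m 1" 1 1 U m m] U by simp
  ultimately show ?thesis
    unfolding unitary_def using U by (simp add: mult_four_block_mat[of _ 1 1 _ m _ m _ _ 1 _ m])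
qed

lemma unitary_schur_decomposition:
  fixes A :: "complex mat"
  assumes "A \<in> carrier_mat n n"
  shows "\<exists>U B. unitary n U \<and> B \<in> carrier_mat n n \<and> upper_triangular B \<and> A = U * B * mat_adjoint U"
  using assms
proof (induction n arbitrary: A)
  case 0
  then show ?case
    by (intro exI[of _ "1\<^sub>m 0"] exI[of _ A]) (auto simp: unitary_def upper_triangular_def)
next
  case (Suc m)
  let ?n = "Suc m"
  obtain W A1 A2 A3 where "unitary ?n W" and A1: "A1 \<in> carrier_mat 1 1" and A2: "A2 \<in> carrier_mat 1 m"
    and A3: "A3 \<in> carrier_mat m m" and A: "A = W * four_block_mat A1 A2 (0\<^sub>m m 1) A3 * mat_adjoint W"
    using unitary_deflation[OF Suc.prems] by metis
  obtain U3 B3 where "unitary m U3" and B3: "B3 \<in> carrier_mat m m" "upper_triangular B3"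
    and A3_eq: "A3 = U3 * B3 * mat_adjoint U3"
    using Suc.IH[OF A3] by blast
  note W = unitaryD[OF \<open>unitary ?n W\<close>] and U3 = unitaryD[OF \<open>unitary m U3\<close>]
  define P where "P = four_block_mat (1\<^sub>m 1) (0\<^sub>m 1 m) (0\<^sub>m m 1) U3"
  define B where "B = four_block_mat A1 (A2 * U3) (0\<^sub>m m 1) B3"
  have "unitary ?n P"
    unfolding P_def by (rule unitary_one_block[OF \<open>unitary m U3\<close>])
  note P = unitaryD[OF this]
  have B: "B \<in> carrier_mat ?n ?n"
    unfolding B_def using A1 A2 B3 U3 four_block_carrier_mat[of A1 1 1 B3 m m] by simp
  have "upper_triangular B"
    unfolding B_def using A1 B3 by (intro upper_triangular_four_block) (auto simp: upper_triangular_def)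
  have "P * B * mat_adjoint P = four_block_mat A1 A2 (0\<^sub>m m 1) A3"
  proof -
    have PB: "P * B = four_block_mat A1 (A2 * U3) (0\<^sub>m m 1) (U3 * B3)"
      unfolding P_def B_def using U3 A1 A2 B3
      by (subst mult_four_block_mat[of _ 1 1 _ m _ m _ _ 1 _ m]) auto
    have P_adj: "mat_adjoint P = four_block_mat (1\<^sub>m 1) (0\<^sub>m 1 m) (0\<^sub>m m 1) (mat_adjoint U3)"
      unfolding P_def using U3 by (subst adjoint_four_block_mat[of _ 1 1 _ m _ m]) auto
    have A2U: "A2 * U3 * mat_adjoint U3 = A2"
      using A2 U3 by (simp add: assoc_mult_mat[of A2 1 m U3 m "mat_adjoint U3" m])
    show ?thesis
      unfolding PB P_adj using U3 A1 A2 B3 A3_eq A2U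
      by (subst mult_four_block_mat[of _ 1 1 _ m _ m _ _ 1 _ m]) auto
  qed
  moreover have "(W * P) * B * mat_adjoint (W * P) = W * (P * B * mat_adjoint P) * mat_adjoint W"
    using W(1,2) P(1,2) B
    by (simp add: adjoint_mult[of _ ?n ?n] assoc_mult_mat[of _ ?n ?n _ ?n _ ?n] mult_carrier_mat[of _ ?n ?n])
  ultimately have "A = (W * P) * B * mat_adjoint (W * P)"
    using A by simp
  then show ?case
    using unitary_mult[OF \<open>unitary ?n W\<close> \<open>unitary ?n P\<close>] B \<open>upper_triangular B\<close> by blast
qed

definition real_diag_mat :: "nat \<Rightarrow> (nat \<Rightarrow> real) \<Rightarrow> complex mat" where
  "real_diag_mat n d = mat n n (\<lambda>(i, j). if i = j then complex_of_real (d i) else 0)"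

lemma real_diag_mat_carrier [simp]:
  "real_diag_mat n d \<in> carrier_mat n n" "dim_row (real_diag_mat n d) = n" "dim_col (real_diag_mat n d) = n"
  unfolding real_diag_mat_def by auto

lemma index_real_diag_mat [simp]:
  "i < n \<Longrightarrow> j < n \<Longrightarrow> real_diag_mat n d $$ (i, j) = (if i = j then complex_of_real (d i) else 0)"
  unfolding real_diag_mat_def by auto

lemma real_diag_mat_cong: "(\<And>i. i < n \<Longrightarrow> d i = e i) \<Longrightarrow> real_diag_mat n d = real_diag_mat n e"
  by (rule eq_matI) auto

lemma adjoint_real_diag_mat [simp]: "mat_adjoint (real_diag_mat n d) = real_diag_mat n d"
  by (rule eq_matI) auto

lemma real_diag_mat_mult: "real_diag_mat n d * real_diag_mat n e = real_diag_mat n (\<lambda>i. d i * e i)"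
proof (rule eq_matI)
  fix i j assume "i < dim_row (real_diag_mat n (\<lambda>i. d i * e i))" "j < dim_col (real_diag_mat n (\<lambda>i. d i * e i))"
  then have i: "i < n" and j: "j < n" by auto
  have "(real_diag_mat n d * real_diag_mat n e) $$ (i, j)
      = (\<Sum>k\<in>{0..<n}. real_diag_mat n d $$ (i, k) * real_diag_mat n e $$ (k, j))"
    using i j by (simp add: scalar_prod_def)
  also have "\<dots> = (\<Sum>k\<in>{0..<n}. if k = i then (if i = j then complex_of_real (d i * e i) else 0) else 0)"
    using i j by (intro sum.cong refl) auto
  also have "\<dots> = real_diag_mat n (\<lambda>i. d i * e i) $$ (i, j)"
    using i j by simp
  finally show "(real_diag_mat n d * real_diag_mat n e) $$ (i, j) = real_diag_mat n (\<lambda>i. d i * e i) $$ (i, j)" .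
qed auto

lemma mtrace_real_diag_mat: "mtrace (real_diag_mat n d) = complex_of_real (\<Sum>i<n. d i)"
  unfolding mtrace_def by simp

lemma unitary_conj_real_diag_mult:
  "unitary n U \<Longrightarrow> (U * real_diag_mat n d * mat_adjoint U) * (U * real_diag_mat n e * mat_adjoint U)
     = U * real_diag_mat n (\<lambda>i. d i * e i) * mat_adjoint U"
  by (simp add: unitary_conj_mult real_diag_mat_mult)

lemma unitary_conj_real_diag_power:
  assumes "unitary n U"
  shows "(U * real_diag_mat n d * mat_adjoint U) ^\<^sub>m k = U * real_diag_mat n (\<lambda>i. d i ^ k) * mat_adjoint U"
proof (induction k)
  case 0
  have "real_diag_mat n (\<lambda>i. d i ^ 0) = 1\<^sub>m n"
    by (rule eq_matI) auto
  then show ?case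
    using unitaryD[OF assms] by simp
next
  case (Suc k)
  then show ?case
    using unitary_conj_real_diag_mult[OF assms, of "\<lambda>i. d i ^ k" d] by (simp add: mult.commute)
qed

lemma mtrace_unitary_conj_real_diag:
  "unitary n U \<Longrightarrow> mtrace (U * real_diag_mat n d * mat_adjoint U) = complex_of_real (\<Sum>i<n. d i)"
  by (simp add: mtrace_unitary_conj mtrace_real_diag_mat)

lemma hermitian_adjoint_sandwich:
  fixes A X :: "complex mat"
  assumes A: "A \<in> carrier_mat n n" and "hermitian A" and X: "X \<in> carrier_mat n m"
  shows "hermitian (mat_adjoint X * A * X)"
proof -
  have "mat_adjoint (mat_adjoint X * A * X) = mat_adjoint X * mat_adjoint (mat_adjoint X * A)"
    using A X by (intro adjoint_mult[of _ m n _ m]) auto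
  also have "mat_adjoint (mat_adjoint X * A) = mat_adjoint A * X"
    using adjoint_mult[of "mat_adjoint X" m n A n] A X by simp
  finally show ?thesis
    using \<open>hermitian A\<close> A X unfolding hermitian_def
    by (simp add: assoc_mult_mat[of "mat_adjoint X" m n A n X m])
qed

lemma hermitian_upper_triangular_eq_real_diag:
  assumes B: "B \<in> carrier_mat n n" and "upper_triangular B" and "hermitian B"
  shows "B = real_diag_mat n (\<lambda>i. Re (B $$ (i, i)))"
proof (rule eq_matI)
  have B_sym: "B $$ (i, j) = cnj (B $$ (j, i))" if "i < n" "j < n" for i j
    using index_adjoint[of i B j] \<open>hermitian B\<close> B that unfolding hermitian_def by auto
  fix i j assume "i < dim_row (real_diag_mat n (\<lambda>i. Re (B $$ (i, i))))"
    "j < dim_col (real_diag_mat n (\<lambda>i. Re (B $$ (i, i))))"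
  then have i: "i < n" and j: "j < n"
    by auto
  consider "i = j" | "j < i" | "i < j"
    by linarith
  then show "B $$ (i, j) = real_diag_mat n (\<lambda>i. Re (B $$ (i, i))) $$ (i, j)"
  proof cases
    case 1
    then show ?thesis
      using B_sym[OF i i] i by (simp add: complex_eq_iff)
  next
    case 2
    then show ?thesis
      using B \<open>upper_triangular B\<close> i j by auto
  next
    case 3
    then show ?thesis
      using B \<open>upper_triangular B\<close> B_sym[OF i j] i j by auto
  qed
qed (use B in auto)

lemma hermitian_spectral:
  assumes A: "A \<in> carrier_mat n n" and "hermitian A"
  shows "\<exists>U d. unitary n U \<and> A = U * real_diag_mat n d * mat_adjoint U"
proof -
  obtain U B where "unitary n U" and B: "B \<in> carrier_mat n n" "upper_triangular B"
    and AUB: "A = U * B * mat_adjoint U"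
    using unitary_schur_decomposition[OF A] by blast
  have "B = mat_adjoint U * A * U"
    using unitary_conj_cancel[OF \<open>unitary n U\<close> B(1)] AUB by simp
  then have "hermitian B"
    using hermitian_adjoint_sandwich[OF A \<open>hermitian A\<close> unitaryD(1)[OF \<open>unitary n U\<close>]] by simp
  then show ?thesis
    using hermitian_upper_triangular_eq_real_diag[OF B] \<open>unitary n U\<close> AUB by metis
qed

lemma quadratic_form_unitary_col:
  fixes A U :: "complex mat"
  assumes A: "A \<in> carrier_mat n n" and U: "U \<in> carrier_mat n n" and i: "i < n"
  shows "(mat_adjoint U * A * U) $$ (i, i) = (A *\<^sub>v col U i) \<bullet>c col U i"
proof -
  have "(mat_adjoint U * A * U) $$ (i, i) = (\<Sum>b<n. (\<Sum>a<n. cnj (U $$ (a, i)) * A $$ (a, b)) * U $$ (b, i))"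
    using A U i by (simp add: scalar_prod_def atLeast0LessThan)
  also have "\<dots> = (\<Sum>b<n. \<Sum>a<n. cnj (U $$ (a, i)) * A $$ (a, b) * U $$ (b, i))"
    by (simp add: sum_distrib_right)
  also have "\<dots> = (\<Sum>a<n. \<Sum>b<n. cnj (U $$ (a, i)) * A $$ (a, b) * U $$ (b, i))"
    by (rule sum.swap)
  also have "\<dots> = (\<Sum>a<n. (\<Sum>b<n. A $$ (a, b) * U $$ (b, i)) * cnj (U $$ (a, i)))"
    by (simp add: sum_distrib_right sum_distrib_left mult_ac)
  also have "\<dots> = (A *\<^sub>v col U i) \<bullet>c col U i"
    using A U i by (simp add: scalar_prod_def atLeast0LessThan)
  finally show ?thesis .
qed

lemma psd_spectral:
  assumes "psd n A"
  shows "\<exists>U d. unitary n U \<and> A = U * real_diag_mat n d * mat_adjoint U \<and> (\<forall>i<n. d i \<ge> 0)"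
proof -
  have A: "A \<in> carrier_mat n n" and "hermitian A"
    using assms unfolding psd_def by auto
  obtain U d where "unitary n U" and AUd: "A = U * real_diag_mat n d * mat_adjoint U"
    using hermitian_spectral[OF A \<open>hermitian A\<close>] by blast
  note U = unitaryD[OF this(1)]
  have D: "mat_adjoint U * A * U = real_diag_mat n d"
    using unitary_conj_cancel[OF \<open>unitary n U\<close>, of "real_diag_mat n d"] AUd by simp
  have "d i \<ge> 0" if i: "i < n" for i
  proof -
    have "complex_of_real (d i) = (A *\<^sub>v col U i) \<bullet>c col U i"
      using D i quadratic_form_unitary_col[OF A U(1) i] by simp
    moreover have "col U i \<in> carrier_vec n"
      using U by auto
    ultimately show ?thesis
      using assms unfolding psd_def by (metis Re_complex_of_real)
  qed
  then show ?thesis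
    using \<open>unitary n U\<close> AUd by blast
qed

section \<open>Positive semidefinite matrices and their square roots\<close>

lemma psd_mult_adjoint:
  fixes M :: "complex mat"
  assumes M: "M \<in> carrier_mat n m"
  shows "psd n (M * mat_adjoint M)"
proof -
  have "hermitian (M * mat_adjoint M)"
    unfolding hermitian_def using adjoint_mult[OF M adjoint_carrier[OF M]] by simp
  moreover have "0 \<le> Re ((M * mat_adjoint M *\<^sub>v v) \<bullet>c v)" if v: "v \<in> carrier_vec n" for v
  proof -
    define w where "w = mat_adjoint M *\<^sub>v v"
    have w: "w \<in> carrier_vec m"
      unfolding w_def using M v by (intro mult_mat_vec_carrier[of _ m n]) auto
    have "M * mat_adjoint M *\<^sub>v v = M *\<^sub>v w"
      unfolding w_def using M v by (intro assoc_mult_mat_vec) auto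
    then have "(M * mat_adjoint M *\<^sub>v v) \<bullet>c v = w \<bullet>c w"
      using adjoint_cscalar_prod[OF M w v] by (simp add: w_def)
    then show ?thesis
      by (simp add: cscalar_prod_self sum_nonneg)
  qed
  ultimately show ?thesis
    using M unfolding psd_def by auto
qed

lemma unitary_conj_real_diag_factor:
  assumes "unitary n U" and d: "\<forall>i<n. d i \<ge> 0"
  shows "U * real_diag_mat n d * mat_adjoint U
    = (U * real_diag_mat n (\<lambda>i. sqrt (d i))) * mat_adjoint (U * real_diag_mat n (\<lambda>i. sqrt (d i)))"
proof -
  note U = unitaryD[OF assms(1)]
  have "real_diag_mat n d = real_diag_mat n (\<lambda>i. sqrt (d i)) * real_diag_mat n (\<lambda>i. sqrt (d i))"
    unfolding real_diag_mat_mult using d by (intro real_diag_mat_cong) simp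
  then show ?thesis
    using U(1,2) by (simp add: adjoint_mult[of _ n n _ n] assoc_mult_mat[of _ n n _ n _ n] mult_carrier_mat[of _ n n])
qed

lemma psd_unitary_conj_real_diag:
  assumes "unitary n U" and "\<forall>i<n. d i \<ge> 0"
  shows "psd n (U * real_diag_mat n d * mat_adjoint U)"
  unfolding unitary_conj_real_diag_factor[OF assms]
  using unitaryD(1)[OF assms(1)] by (intro psd_mult_adjoint[of _ n n]) simp

lemma psd_factor:
  assumes "psd n B"
  obtains S where "S \<in> carrier_mat n n" and "B = S * mat_adjoint S"
proof -
  obtain U d where U: "unitary n U" and B: "B = U * real_diag_mat n d * mat_adjoint U" and d: "\<forall>i<n. d i \<ge> 0"
    using psd_spectral[OF assms] by blast
  then show ?thesis
    using that[of "U * real_diag_mat n (\<lambda>i. sqrt (d i))"] unitaryD(1)[OF U]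
      unitary_conj_real_diag_factor[OF U d] by simp
qed

lemma psd_sandwich:
  fixes X B :: "complex mat"
  assumes B: "psd n B" and X: "X \<in> carrier_mat n n" and "hermitian X"
  shows "psd n (X * B * X)"
proof -
  obtain S where S: "S \<in> carrier_mat n n" and BS: "B = S * mat_adjoint S"
    using psd_factor[OF B] .
  have "X * B * X = (X * S) * mat_adjoint (X * S)"
    using X S \<open>hermitian X\<close> unfolding BS hermitian_def
    by (simp add: adjoint_mult[of _ n n _ n] assoc_mult_mat[of _ n n _ n _ n] mult_carrier_mat[of _ n n])
  then show ?thesis
    using X S psd_mult_adjoint[of "X * S" n n] by simp
qed

lemma psd_trace:
  assumes "psd n M"
  obtains d where "mtrace M = complex_of_real (\<Sum>i<n. d i)" and "\<And>i. i < n \<Longrightarrow> d i \<ge> 0"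
    and "(\<Sum>i<n. d i) = 0 \<Longrightarrow> M = 0\<^sub>m n n"
proof -
  obtain U d where "unitary n U" and M: "M = U * real_diag_mat n d * mat_adjoint U" and d: "\<forall>i<n. d i \<ge> 0"
    using psd_spectral[OF assms] by blast
  have zero: "M = 0\<^sub>m n n" if "(\<Sum>i<n. d i) = 0"
  proof -
    have "\<forall>i\<in>{..<n}. d i = 0"
      using that d by (subst sum_nonneg_eq_0_iff[symmetric]) auto
    then have "real_diag_mat n d = real_diag_mat n (\<lambda>_. 0)"
      by (intro real_diag_mat_cong) auto
    also have "\<dots> = 0\<^sub>m n n"
      by (rule eq_matI) auto
    finally show ?thesis
      using M unitaryD[OF \<open>unitary n U\<close>] by simp
  qed
  show ?thesis
    by (rule that[of d]) (use mtrace_unitary_conj_real_diag[OF \<open>unitary n U\<close>, of d] M d zero in auto)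
qed

lemma psd_trace_add_eq_zero:
  assumes "psd n M" and "psd n N" and "mtrace M + mtrace N = 0"
  shows "M = 0\<^sub>m n n"
proof -
  obtain d where d: "mtrace M = complex_of_real (\<Sum>i<n. d i)" "\<And>i. i < n \<Longrightarrow> d i \<ge> 0"
    and M: "(\<Sum>i<n. d i) = 0 \<Longrightarrow> M = 0\<^sub>m n n"
    using psd_trace[OF assms(1)] by blast
  obtain e where e: "mtrace N = complex_of_real (\<Sum>i<n. e i)" "\<And>i. i < n \<Longrightarrow> e i \<ge> 0"
    using psd_trace[OF assms(2)] by blast
  have "complex_of_real ((\<Sum>i<n. d i) + (\<Sum>i<n. e i)) = 0"
    using assms(3) d(1) e(1) by simp
  then have "(\<Sum>i<n. d i) + (\<Sum>i<n. e i) = 0"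
    by (simp only: of_real_eq_0_iff)
  moreover have "(\<Sum>i<n. d i) \<ge> 0" and "(\<Sum>i<n. e i) \<ge> 0"
    using d(2) e(2) by (auto intro: sum_nonneg)
  ultimately show ?thesis
    using M by simp
qed

lemma hermitian_cube_eq_zero:
  fixes X :: "complex mat"
  assumes X: "X \<in> carrier_mat n n" and "hermitian X" and X3: "X * X * X = 0\<^sub>m n n"
  shows "X = 0\<^sub>m n n"
proof -
  obtain U d where "unitary n U" and XU: "X = U * real_diag_mat n d * mat_adjoint U"
    using hermitian_spectral[OF X \<open>hermitian X\<close>] by blast
  note U = unitaryD[OF this(1)]
  have "X * X * X = U * real_diag_mat n (\<lambda>i. d i * d i * d i) * mat_adjoint U"
    unfolding XU by (simp add: unitary_conj_real_diag_mult[OF \<open>unitary n U\<close>])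
  then have "real_diag_mat n (\<lambda>i. d i * d i * d i) = mat_adjoint U * (X * X * X) * U"
    using unitary_conj_cancel[OF \<open>unitary n U\<close>, of "real_diag_mat n (\<lambda>i. d i * d i * d i)"] by simp
  also have "\<dots> = 0\<^sub>m n n"
    using X3 U by simp
  finally have D3: "real_diag_mat n (\<lambda>i. d i * d i * d i) = 0\<^sub>m n n" .
  have "d i = 0" if "i < n" for i
    using arg_cong[OF D3, of "\<lambda>M. M $$ (i, i)"] that by simp
  then have "real_diag_mat n d = 0\<^sub>m n n"
    by (intro eq_matI) auto
  then show ?thesis
    using XU U by simp
qed

lemma mtrace_sandwich_diff:
  fixes B C M :: "complex mat"
  assumes B: "B \<in> carrier_mat n n" and C: "C \<in> carrier_mat n n" and M: "M \<in> carrier_mat n n"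
  shows "mtrace ((B - C) * M * (B - C))
    = mtrace (B * M * B) - mtrace (C * M * B) - (mtrace (B * M * C) - mtrace (C * M * C))"
proof -
  have BM: "B * M \<in> carrier_mat n n" and CM: "C * M \<in> carrier_mat n n"
    using B C M by auto
  have "(B - C) * M = B * M - C * M"
    using B C M by (rule minus_mult_distrib_mat)
  moreover have "B * M - C * M \<in> carrier_mat n n"
    using CM by (rule minus_carrier_mat)
  ultimately have "(B - C) * M * (B - C) = (B * M - C * M) * B - (B * M - C * M) * C"
    using B C by (simp add: mult_minus_distrib_mat)
  also have "(B * M - C * M) * B = B * M * B - C * M * B"
    using BM CM B by (rule minus_mult_distrib_mat)
  also have "(B * M - C * M) * C = B * M * C - C * M * C"
    using BM CM C by (rule minus_mult_distrib_mat)
  finally show ?thesis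
    using BM CM B C by (simp add: mtrace_minus[of _ n] minus_carrier_mat mult_carrier_mat[of _ n n])
qed

text \<open>With \<open>P = B\<^sup>2 = C\<^sup>2\<close>, cyclicity turns each of the eight traces into \<open>tr (P B)\<close> or \<open>tr (P C)\<close>,
  and these cancel.\<close>

lemma mtrace_sandwich_squares_eq:
  fixes B C :: "complex mat"
  assumes B: "B \<in> carrier_mat n n" and C: "C \<in> carrier_mat n n" and sq: "B * B = C * C"
  shows "mtrace ((B - C) * B * (B - C)) + mtrace ((B - C) * C * (B - C)) = 0"
proof -
  have cyc: "mtrace (X * Y) = mtrace (Y * X)" if "X \<in> carrier_mat n n" "Y \<in> carrier_mat n n" for X Y
    using mtrace_mult_comm[OF that] .
  note carriers = B C mult_carrier_mat[of _ n n _ n]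
  have "mtrace (C * B * B) = mtrace (B * B * C)"
    using carriers by (simp add: cyc[of C])
  moreover have "mtrace (C * B * C) = mtrace (B * B * B)"
    using carriers cyc[of C "C * B"] by (simp add: sq)
  moreover have "mtrace (B * C * B) = mtrace (B * B * C)"
    using carriers cyc[of B "B * C"] by simp
  moreover have "mtrace (B * C * C) = mtrace (B * B * B)"
    using carriers cyc[of B "C * C"] by (simp flip: sq)
  moreover have "mtrace (C * C * B) = mtrace (B * B * B)" "mtrace (C * C * C) = mtrace (B * B * C)"
    by (simp_all flip: sq)
  ultimately show ?thesis
    using B C by (simp add: mtrace_sandwich_diff)
qed

text \<open>With \<open>X = B - C\<close>, the matrices \<open>X B X\<close> and \<open>X C X\<close> are positive semidefinite with traces
  summing to zero; so both vanish, \<open>X\<^sup>3 = X B X - X C X = 0\<close> and \<open>X = 0\<close>.\<close>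

lemma psd_sqrt_unique:
  assumes B: "psd n B" and C: "psd n C" and sq: "B * B = C * C"
  shows "B = C"
proof -
  have Bc: "B \<in> carrier_mat n n" and hB: "mat_adjoint B = B"
    using B unfolding psd_def hermitian_def by auto
  have Cc: "C \<in> carrier_mat n n" and hC: "mat_adjoint C = C"
    using C unfolding psd_def hermitian_def by auto
  define X where "X = B - C"
  have X: "X \<in> carrier_mat n n"
    using Bc Cc by (simp add: X_def minus_carrier_mat)
  have "hermitian X"
    unfolding hermitian_def X_def using adjoint_minus[OF Bc Cc] hB hC by simp
  have pB: "psd n (X * B * X)" and pC: "psd n (X * C * X)"
    using psd_sandwich[OF _ X \<open>hermitian X\<close>] B C by auto
  have "mtrace (X * B * X) + mtrace (X * C * X) = 0"
    using mtrace_sandwich_squares_eq[OF Bc Cc sq] by (simp add: X_def)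
  then have "X * B * X = 0\<^sub>m n n" and "X * C * X = 0\<^sub>m n n"
    using psd_trace_add_eq_zero[OF pB pC] psd_trace_add_eq_zero[OF pC pB] by (simp_all add: add.commute)
  moreover have "X * X * X = X * B * X - X * C * X"
  proof -
    have "X * X = X * B - X * C"
      unfolding X_def using Bc Cc by (intro mult_minus_distrib_mat) (auto simp: minus_carrier_mat)
    then show ?thesis
      using X Bc Cc by (simp add: minus_mult_distrib_mat[of _ n n] mult_carrier_mat[of _ n n])
  qed
  ultimately have "X * X * X = 0\<^sub>m n n"
    by simp
  then have "X = 0\<^sub>m n n"
    using hermitian_cube_eq_zero[OF X \<open>hermitian X\<close>] by simp
  show ?thesis
  proof (rule eq_matI)
    fix i j assume "i < dim_row C" "j < dim_col C"
    then have "(B - C) $$ (i, j) = 0"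
      using \<open>X = 0\<^sub>m n n\<close> Cc by (simp add: X_def)
    then show "B $$ (i, j) = C $$ (i, j)"
      using \<open>i < dim_row C\<close> \<open>j < dim_col C\<close> Bc Cc by simp
  qed (use Bc Cc in auto)
qed

lemma psd_sqrt_unitary_conj_real_diag:
  assumes U: "unitary n U" and d: "\<forall>i<n. d i \<ge> 0"
  shows "psd_sqrt (U * real_diag_mat n d * mat_adjoint U) = U * real_diag_mat n (\<lambda>i. sqrt (d i)) * mat_adjoint U"
proof -
  let ?A = "U * real_diag_mat n d * mat_adjoint U"
  let ?S = "U * real_diag_mat n (\<lambda>i. sqrt (d i)) * mat_adjoint U"
  have S: "psd n ?S"
    by (rule psd_unitary_conj_real_diag[OF U]) (use d in simp)
  have "real_diag_mat n (\<lambda>i. sqrt (d i) * sqrt (d i)) = real_diag_mat n d"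
    using d by (intro real_diag_mat_cong) simp
  then have SS: "?S * ?S = ?A"
    unfolding unitary_conj_real_diag_mult[OF U] by simp
  have "dim_row ?A = n"
    using unitaryD(1)[OF U] by simp
  then show ?thesis
    unfolding psd_sqrt_def
  proof (rule ssubst, intro the_equality)
    show "psd n ?S \<and> ?S * ?S = ?A"
      using S SS by simp
    show "B = ?S" if "psd n B \<and> B * B = ?A" for B
      using psd_sqrt_unique[of n B ?S] S SS that by simp
  qed
qed

lemma tr_half_pow_eq_sum:
  assumes U: "unitary n U" and d: "\<forall>i<n. d i \<ge> 0"
    and MM: "M * mat_adjoint M = U * real_diag_mat n d * mat_adjoint U"
  shows "tr_half_pow M k = (\<Sum>i<n. sqrt (d i) ^ k)"
proof -
  have "tr_half_pow M k = Re (mtrace ((U * real_diag_mat n (\<lambda>i. sqrt (d i)) * mat_adjoint U) ^\<^sub>m k))"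
    unfolding tr_half_pow_def MM psd_sqrt_unitary_conj_real_diag[OF U d] ..
  also have "\<dots> = Re (mtrace (U * real_diag_mat n (\<lambda>i. sqrt (d i) ^ k) * mat_adjoint U))"
    by (simp only: unitary_conj_real_diag_power[OF U])
  also have "\<dots> = (\<Sum>i<n. sqrt (d i) ^ k)"
    by (simp only: mtrace_unitary_conj_real_diag[OF U] Re_complex_of_real)
  finally show ?thesis .
qed

lemma sum_power2_squared_le:
  fixes s :: "'a \<Rightarrow> real"
  assumes s: "\<And>i. i \<in> A \<Longrightarrow> s i \<ge> 0"
  shows "(\<Sum>i\<in>A. s i ^ 2)\<^sup>2 \<le> (\<Sum>i\<in>A. s i) * (\<Sum>i\<in>A. s i ^ 3)"
proof -
  have "(\<Sum>i\<in>A. s i ^ 2) = (\<Sum>i\<in>A. \<bar>sqrt (s i)\<bar> * \<bar>s i * sqrt (s i)\<bar>)"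
    using s by (intro sum.cong refl) (simp add: abs_mult power2_eq_square mult_ac)
  also have "\<dots> \<le> L2_set (\<lambda>i. sqrt (s i)) A * L2_set (\<lambda>i. s i * sqrt (s i)) A"
    by (rule L2_set_mult_ineq)
  also have "L2_set (\<lambda>i. sqrt (s i)) A = sqrt (\<Sum>i\<in>A. s i)"
    unfolding L2_set_def using s by (intro arg_cong[where f = sqrt] sum.cong) auto
  also have "L2_set (\<lambda>i. s i * sqrt (s i)) A = sqrt (\<Sum>i\<in>A. s i ^ 3)"
    unfolding L2_set_def using s
    by (intro arg_cong[where f = sqrt] sum.cong) (auto simp: power_mult_distrib power3_eq_cube power2_eq_square)
  finally have "(\<Sum>i\<in>A. s i ^ 2)\<^sup>2 \<le> (sqrt (\<Sum>i\<in>A. s i) * sqrt (\<Sum>i\<in>A. s i ^ 3))\<^sup>2"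
    by (intro power_mono) (auto intro: sum_nonneg)
  also have "\<dots> = (\<Sum>i\<in>A. s i) * (\<Sum>i\<in>A. s i ^ 3)"
    using s by (simp add: power_mult_distrib sum_nonneg)
  finally show ?thesis .
qed

lemma tr_half_pow_singular_values:
  assumes "M \<in> carrier_mat m n"
  shows "\<exists>s. (\<forall>i<m. s i \<ge> 0) \<and> (\<forall>k. tr_half_pow M k = (\<Sum>i<m. s i ^ k))"
proof -
  obtain U d where U: "unitary m U" and MM: "M * mat_adjoint M = U * real_diag_mat m d * mat_adjoint U"
    and d: "\<forall>i<m. d i \<ge> 0"
    using psd_spectral[OF psd_mult_adjoint[OF assms]] by blast
  show ?thesis
    using d tr_half_pow_eq_sum[OF U d MM] by (intro exI[of _ "\<lambda>i. sqrt (d i)"]) simp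
qed

lemma tr_half_pow_nonneg:
  assumes "M \<in> carrier_mat m n"
  shows "tr_half_pow M k \<ge> 0"
proof -
  obtain s where s: "\<forall>i<m. s i \<ge> 0" and tr: "tr_half_pow M k = (\<Sum>i<m. s i ^ k)"
    using tr_half_pow_singular_values[OF assms] by blast
  have "0 \<le> (\<Sum>i<m. s i ^ k)"
    using s by (intro sum_nonneg) simp
  then show ?thesis
    unfolding tr .
qed

lemma tr_half_pow_2_squared_le:
  assumes "M \<in> carrier_mat m n"
  shows "(tr_half_pow M 2)\<^sup>2 \<le> tr_half_pow M 1 * tr_half_pow M 3"
  using tr_half_pow_singular_values[OF assms] sum_power2_squared_le[of "{..<m}"] by auto

section \<open>The trace norm of a mixture of rank-one matrices\<close>

lemma unitary_cols_orthonormal: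
  assumes "unitary n U" and "i < n" and "l < n"
  shows "(\<Sum>a<n. U $$ (a, i) * cnj (U $$ (a, l))) = (if i = l then 1 else 0)"
proof -
  note U = unitaryD[OF assms(1)]
  have "(\<Sum>a<n. U $$ (a, i) * cnj (U $$ (a, l))) = (mat_adjoint U * U) $$ (l, i)"
    using U(1) assms(2,3) by (simp add: scalar_prod_def atLeast0LessThan mult.commute)
  then show ?thesis
    using U assms by simp
qed

lemma cmod_sum_orthonormal_coeffs_le:
  fixes x :: "'a \<Rightarrow> complex" and y :: "'b \<Rightarrow> complex"
  assumes "finite I"
    and f: "\<And>i l. i \<in> I \<Longrightarrow> l \<in> I \<Longrightarrow> (\<Sum>a\<in>A. f i a * cnj (f l a)) = (if i = l then 1 else 0)"
    and g: "\<And>i l. i \<in> I \<Longrightarrow> l \<in> I \<Longrightarrow> (\<Sum>b\<in>B. g i b * cnj (g l b)) = (if i = l then 1 else 0)"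
  shows "cmod (\<Sum>i\<in>I. (\<Sum>a\<in>A. x a * cnj (f i a)) * (\<Sum>b\<in>B. y b * cnj (g i b)))
    \<le> sqrt (\<Sum>a\<in>A. (cmod (x a))\<^sup>2) * sqrt (\<Sum>b\<in>B. (cmod (y b))\<^sup>2)"
proof -
  have "cmod (\<Sum>i\<in>I. (\<Sum>a\<in>A. x a * cnj (f i a)) * (\<Sum>b\<in>B. y b * cnj (g i b)))
      \<le> sqrt (\<Sum>i\<in>I. (cmod (\<Sum>a\<in>A. x a * cnj (f i a)))\<^sup>2) * sqrt (\<Sum>i\<in>I. (cmod (\<Sum>b\<in>B. y b * cnj (g i b)))\<^sup>2)"
    by (rule cmod_sum_mult_le)
  also have "\<dots> \<le> sqrt (\<Sum>a\<in>A. (cmod (x a))\<^sup>2) * sqrt (\<Sum>b\<in>B. (cmod (y b))\<^sup>2)"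
    using bessel_inequality[OF assms(1) f, of x] bessel_inequality[OF assms(1) g, of y]
    by (intro mult_mono real_sqrt_le_mono) (auto intro: sum_nonneg)
  finally show ?thesis .
qed

lemma normalized_orthogonal_rows:
  fixes G :: "nat \<Rightarrow> nat \<Rightarrow> complex"
  assumes rows: "\<And>i l. i < m1 \<Longrightarrow> l < m1 \<Longrightarrow>
      (\<Sum>j<m2. G i j * cnj (G l j)) = (if i = l then complex_of_real (d i) else 0)"
    and d: "\<forall>i<m1. d i \<ge> 0"
    and I_def: "I = {i. i < m1 \<and> d i > 0}" and h_def: "h = (\<lambda>i j. G i j / complex_of_real (sqrt (d i)))"
  shows "\<And>i l. i \<in> I \<Longrightarrow> l \<in> I \<Longrightarrow> (\<Sum>j<m2. h i j * cnj (h l j)) = (if i = l then 1 else 0)"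
    and "(\<Sum>i<m1. sqrt (d i)) = cmod (\<Sum>i\<in>I. \<Sum>j<m2. G i j * cnj (h i j))"
proof -
  have h_rows: "(\<Sum>j<m2. h i j * cnj (h l j)) = (\<Sum>j<m2. G i j * cnj (G l j)) / complex_of_real (sqrt (d i) * sqrt (d l))"
    for i l
    unfolding h_def by (simp add: sum_divide_distrib)
  show "(\<Sum>j<m2. h i j * cnj (h l j)) = (if i = l then 1 else 0)" if "i \<in> I" "l \<in> I" for i l
    using h_rows[of i l] rows[of i l] that unfolding I_def by (auto simp flip: of_real_mult)
  have "complex_of_real (sqrt (d i)) = (\<Sum>j<m2. G i j * cnj (h i j))" if "i \<in> I" for i
  proof -
    have "(\<Sum>j<m2. G i j * cnj (h i j)) = (\<Sum>j<m2. G i j * cnj (G i j)) / complex_of_real (sqrt (d i))"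
      unfolding h_def by (simp add: sum_divide_distrib)
    also have "\<dots> = complex_of_real (d i) / complex_of_real (sqrt (d i))"
      using rows[of i i] that unfolding I_def by simp
    also have "\<dots> = complex_of_real (sqrt (d i))"
      using that unfolding I_def by (simp add: field_simps flip: of_real_mult)
    finally show ?thesis ..
  qed
  then have "(\<Sum>i\<in>I. \<Sum>j<m2. G i j * cnj (h i j)) = complex_of_real (\<Sum>i\<in>I. sqrt (d i))"
    by simp
  moreover have "(\<Sum>i<m1. sqrt (d i)) = (\<Sum>i\<in>I. sqrt (d i))"
    using d unfolding I_def by (intro sum.mono_neutral_right) auto
  moreover have "(\<Sum>i\<in>I. sqrt (d i)) \<ge> 0"
    by (intro sum_nonneg) (simp add: I_def)
  ultimately show "(\<Sum>i<m1. sqrt (d i)) = cmod (\<Sum>i\<in>I. \<Sum>j<m2. G i j * cnj (h i j))"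
    by (metis norm_of_real abs_of_nonneg)
qed

lemma sum_mixture_coeffs_eq:
  fixes G :: "nat \<Rightarrow> nat \<Rightarrow> complex" and x f :: "nat \<Rightarrow> 'a \<Rightarrow> complex" and y :: "nat \<Rightarrow> nat \<Rightarrow> complex"
  assumes G: "\<And>i j. i < m1 \<Longrightarrow> j < m2 \<Longrightarrow>
      G i j = (\<Sum>k<K. complex_of_real (p k) * (\<Sum>a\<in>A. x k a * cnj (f i a)) * y k j)"
    and "I \<subseteq> {..<m1}"
  shows "(\<Sum>i\<in>I. \<Sum>j<m2. G i j * cnj (h i j))
    = (\<Sum>k<K. complex_of_real (p k) *
        (\<Sum>i\<in>I. (\<Sum>a\<in>A. x k a * cnj (f i a)) * (\<Sum>j<m2. y k j * cnj (h i j))))"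
proof -
  define X where "X k i = (\<Sum>a\<in>A. x k a * cnj (f i a))" for k i
  have "(\<Sum>i\<in>I. \<Sum>j<m2. G i j * cnj (h i j))
      = (\<Sum>i\<in>I. \<Sum>j<m2. \<Sum>k<K. complex_of_real (p k) * (X k i * (y k j * cnj (h i j))))"
  proof (intro sum.cong refl)
    fix i j assume "i \<in> I" "j \<in> {..<m2}"
    then have "i < m1" "j < m2"
      using \<open>I \<subseteq> {..<m1}\<close> by auto
    then show "G i j * cnj (h i j) = (\<Sum>k<K. complex_of_real (p k) * (X k i * (y k j * cnj (h i j))))"
      by (simp add: G X_def sum_distrib_left sum_distrib_right mult_ac)
  qed
  also have "\<dots> = (\<Sum>i\<in>I. \<Sum>k<K. \<Sum>j<m2. complex_of_real (p k) * (X k i * (y k j * cnj (h i j))))"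
    by (rule sum.cong[OF refl], rule sum.swap)
  also have "\<dots> = (\<Sum>k<K. \<Sum>i\<in>I. \<Sum>j<m2. complex_of_real (p k) * (X k i * (y k j * cnj (h i j))))"
    by (rule sum.swap)
  also have "\<dots> = (\<Sum>k<K. complex_of_real (p k) * (\<Sum>i\<in>I. X k i * (\<Sum>j<m2. y k j * cnj (h i j))))"
    by (simp add: sum_distrib_left)
  finally show ?thesis
    unfolding X_def .
qed

text \<open>The trace-norm bound in coordinates: \<open>G\<close> stands for \<open>U\<^sup>* M\<close>, whose rows \<open>G\<^sub>i\<close> are orthogonal
  with \<open>\<parallel>G\<^sub>i\<parallel>\<^sup>2 = d\<^sub>i\<close>. Then \<open>\<Sum>\<^sub>i \<parallel>G\<^sub>i\<parallel> = \<Sum>\<^sub>i \<langle>G\<^sub>i, h\<^sub>i\<rangle>\<close> for the orthonormal family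
  \<open>h\<^sub>i = G\<^sub>i / \<parallel>G\<^sub>i\<parallel>\<close>; expanding \<open>G\<close> into rank-one terms, each term is bounded by
  Cauchy--Schwarz and Bessel.\<close>

lemma sum_sqrt_orthogonal_rows_le:
  fixes G :: "nat \<Rightarrow> nat \<Rightarrow> complex" and x f :: "nat \<Rightarrow> 'a \<Rightarrow> complex" and y :: "nat \<Rightarrow> nat \<Rightarrow> complex"
  assumes rows: "\<And>i l. i < m1 \<Longrightarrow> l < m1 \<Longrightarrow>
      (\<Sum>j<m2. G i j * cnj (G l j)) = (if i = l then complex_of_real (d i) else 0)"
    and d: "\<forall>i<m1. d i \<ge> 0"
    and G: "\<And>i j. i < m1 \<Longrightarrow> j < m2 \<Longrightarrow>
      G i j = (\<Sum>k<K. complex_of_real (p k) * (\<Sum>a\<in>A. x k a * cnj (f i a)) * y k j)"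
    and f: "\<And>i l. i < m1 \<Longrightarrow> l < m1 \<Longrightarrow> (\<Sum>a\<in>A. f i a * cnj (f l a)) = (if i = l then 1 else 0)"
    and p: "\<And>k. k < K \<Longrightarrow> p k \<ge> 0"
  shows "(\<Sum>i<m1. sqrt (d i))
    \<le> (\<Sum>k<K. p k * (sqrt (\<Sum>a\<in>A. (cmod (x k a))\<^sup>2) * sqrt (\<Sum>j<m2. (cmod (y k j))\<^sup>2)))"
proof -
  define I where "I = {i. i < m1 \<and> d i > 0}"
  define h where "h = (\<lambda>i j. G i j / complex_of_real (sqrt (d i)))"
  have I: "finite I" "I \<subseteq> {..<m1}"
    unfolding I_def by auto
  have h_orth: "(\<Sum>j<m2. h i j * cnj (h l j)) = (if i = l then 1 else 0)" if "i \<in> I" "l \<in> I" for i l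
    by (rule normalized_orthogonal_rows(1)[where G = G]) (use rows d I_def h_def that in auto)
  have "(\<Sum>i<m1. sqrt (d i)) = cmod (\<Sum>i\<in>I. \<Sum>j<m2. G i j * cnj (h i j))"
    by (rule normalized_orthogonal_rows(2)) (use rows d I_def h_def in auto)
  also have "\<dots> = cmod (\<Sum>k<K. complex_of_real (p k) *
      (\<Sum>i\<in>I. (\<Sum>a\<in>A. x k a * cnj (f i a)) * (\<Sum>j<m2. y k j * cnj (h i j))))"
    by (subst sum_mixture_coeffs_eq[where G = G]) (use G I(2) in auto)
  also have "\<dots> \<le> (\<Sum>k<K. p k * cmod (\<Sum>i\<in>I. (\<Sum>a\<in>A. x k a * cnj (f i a)) * (\<Sum>j<m2. y k j * cnj (h i j))))"
    using p by (intro order_trans[OF norm_sum] sum_mono) (simp add: norm_mult)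
  also have "\<dots> \<le> (\<Sum>k<K. p k * (sqrt (\<Sum>a\<in>A. (cmod (x k a))\<^sup>2) * sqrt (\<Sum>j<m2. (cmod (y k j))\<^sup>2)))"
    using p f h_orth I(2)
    by (intro sum_mono mult_left_mono cmod_sum_orthonormal_coeffs_le[OF I(1)]) (auto simp: subset_eq)
  finally show ?thesis .
qed

lemma unitary_adjoint_mult_rows:
  fixes M :: "complex mat"
  assumes "unitary m1 U" and M: "M \<in> carrier_mat m1 m2"
    and MM: "M * mat_adjoint M = U * real_diag_mat m1 d * mat_adjoint U"
    and "i < m1" and "l < m1"
  shows "(\<Sum>j<m2. (mat_adjoint U * M) $$ (i, j) * cnj ((mat_adjoint U * M) $$ (l, j)))
    = (if i = l then complex_of_real (d i) else 0)"
proof -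
  note U = unitaryD[OF assms(1)]
  define G where "G = mat_adjoint U * M"
  have G: "G \<in> carrier_mat m1 m2"
    unfolding G_def by (rule mult_carrier_mat[OF U(2) M])
  have MU: "mat_adjoint M * U \<in> carrier_mat m2 m1" and MM': "M * mat_adjoint M \<in> carrier_mat m1 m1"
    using M U by auto
  have "G * mat_adjoint G = (mat_adjoint U * M) * (mat_adjoint M * U)"
    unfolding G_def adjoint_mult[OF U(2) M] adjoint_adjoint ..
  also have "\<dots> = mat_adjoint U * (M * (mat_adjoint M * U))"
    by (rule assoc_mult_mat[OF U(2) M MU])
  also have "M * (mat_adjoint M * U) = (M * mat_adjoint M) * U"
    by (rule assoc_mult_mat[OF M adjoint_carrier[OF M] U(1), symmetric])
  also have "mat_adjoint U * ((M * mat_adjoint M) * U) = mat_adjoint U * (M * mat_adjoint M) * U"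
    by (rule assoc_mult_mat[OF U(2) MM' U(1), symmetric])
  also have "\<dots> = real_diag_mat m1 d"
    unfolding MM by (rule unitary_conj_cancel[OF assms(1) real_diag_mat_carrier(1)])
  finally have "G * mat_adjoint G = real_diag_mat m1 d" .
  moreover have "(G * mat_adjoint G) $$ (i, l) = (\<Sum>j<m2. G $$ (i, j) * cnj (G $$ (l, j)))"
    using G assms(4,5) by (simp add: scalar_prod_def atLeast0LessThan)
  ultimately show ?thesis
    using assms(4,5) by (simp add: G_def)
qed

lemma tr_half_pow_1_mixture_le:
  fixes M :: "complex mat" and x y :: "nat \<Rightarrow> nat \<Rightarrow> complex" and p :: "nat \<Rightarrow> real"
  assumes M: "M \<in> carrier_mat m1 m2"
    and entries: "\<And>i j. i < m1 \<Longrightarrow> j < m2 \<Longrightarrow> M $$ (i, j) = (\<Sum>k<K. complex_of_real (p k) * x k i * y k j)"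
    and p: "\<And>k. k < K \<Longrightarrow> p k \<ge> 0"
  shows "tr_half_pow M 1
    \<le> (\<Sum>k<K. p k * (sqrt (\<Sum>i<m1. (cmod (x k i))\<^sup>2) * sqrt (\<Sum>j<m2. (cmod (y k j))\<^sup>2)))"
proof -
  obtain U d where "unitary m1 U" and MM: "M * mat_adjoint M = U * real_diag_mat m1 d * mat_adjoint U"
    and d: "\<forall>i<m1. d i \<ge> 0"
    using psd_spectral[OF psd_mult_adjoint[OF M]] by blast
  note U = unitaryD[OF this(1)]
  have G_entries: "(mat_adjoint U * M) $$ (i, j)
      = (\<Sum>k<K. complex_of_real (p k) * (\<Sum>a<m1. x k a * cnj (U $$ (a, i))) * y k j)"
    if "i < m1" "j < m2" for i j
  proof -
    have "(mat_adjoint U * M) $$ (i, j) = (\<Sum>a<m1. cnj (U $$ (a, i)) * M $$ (a, j))"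
      using that U M by (simp add: scalar_prod_def atLeast0LessThan)
    also have "\<dots> = (\<Sum>a<m1. \<Sum>k<K. complex_of_real (p k) * (x k a * cnj (U $$ (a, i))) * y k j)"
      using that by (simp add: entries sum_distrib_left mult_ac)
    also have "\<dots> = (\<Sum>k<K. complex_of_real (p k) * (\<Sum>a<m1. x k a * cnj (U $$ (a, i))) * y k j)"
      by (subst sum.swap) (simp add: sum_distrib_left sum_distrib_right mult_ac)
    finally show ?thesis .
  qed
  have "tr_half_pow M 1 = (\<Sum>i<m1. sqrt (d i))"
    using tr_half_pow_eq_sum[OF \<open>unitary m1 U\<close> d MM, of 1] by simp
  also have "\<dots> \<le> (\<Sum>k<K. p k * (sqrt (\<Sum>i<m1. (cmod (x k i))\<^sup>2) * sqrt (\<Sum>j<m2. (cmod (y k j))\<^sup>2)))"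
    by (rule sum_sqrt_orthogonal_rows_le[where G = "\<lambda>i j. (mat_adjoint U * M) $$ (i, j)"
          and f = "\<lambda>i a. U $$ (a, i)"])
      (use unitary_adjoint_mult_rows[OF \<open>unitary m1 U\<close> M MM] d G_entries
          unitary_cols_orthonormal[OF \<open>unitary m1 U\<close>] p in auto)
  finally show ?thesis .
qed

lemma tr_half_pow_squared_le_mixture:
  fixes M :: "complex mat" and x y :: "nat \<Rightarrow> nat \<Rightarrow> complex" and p :: "nat \<Rightarrow> real"
  assumes M: "M \<in> carrier_mat m1 m2"
    and entries: "\<And>i j. i < m1 \<Longrightarrow> j < m2 \<Longrightarrow> M $$ (i, j) = (\<Sum>k<K. complex_of_real (p k) * x k i * y k j)"
    and p: "\<And>k. k < K \<Longrightarrow> p k \<ge> 0" and p1: "(\<Sum>k<K. p k) = 1"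
    and x: "\<And>k. k < K \<Longrightarrow> (\<Sum>i<m1. (cmod (x k i))\<^sup>2) \<le> X"
    and y: "\<And>k. k < K \<Longrightarrow> (\<Sum>j<m2. (cmod (y k j))\<^sup>2) \<le> Y"
  shows "(tr_half_pow M 2)\<^sup>2 \<le> sqrt X * sqrt Y * tr_half_pow M 3"
proof -
  have "tr_half_pow M 1
      \<le> (\<Sum>k<K. p k * (sqrt (\<Sum>i<m1. (cmod (x k i))\<^sup>2) * sqrt (\<Sum>j<m2. (cmod (y k j))\<^sup>2)))"
    by (rule tr_half_pow_1_mixture_le[OF M entries p])
  also have "\<dots> \<le> (\<Sum>k<K. p k * (sqrt X * sqrt Y))"
  proof (intro sum_mono mult_left_mono)
    fix k assume "k \<in> {..<K}"
    then have k: "k < K"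
      by simp
    have "0 \<le> (\<Sum>i<m1. (cmod (x k i))\<^sup>2)"
      by (simp add: sum_nonneg)
    then have "0 \<le> X"
      using x[OF k] by linarith
    then show "sqrt (\<Sum>i<m1. (cmod (x k i))\<^sup>2) * sqrt (\<Sum>j<m2. (cmod (y k j))\<^sup>2) \<le> sqrt X * sqrt Y"
      by (intro mult_mono real_sqrt_le_mono) (use x[OF k] y[OF k] in \<open>auto simp: sum_nonneg\<close>)
    show "0 \<le> p k"
      using p[OF k] .
  qed
  also have "\<dots> = sqrt X * sqrt Y"
    using p1 by (simp flip: sum_distrib_right)
  finally have "tr_half_pow M 1 * tr_half_pow M 3 \<le> sqrt X * sqrt Y * tr_half_pow M 3"
    using tr_half_pow_nonneg[OF M] by (rule mult_right_mono)
  then show ?thesis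
    using tr_half_pow_2_squared_le[OF M] by linarith
qed

section \<open>Separable states and Bloch vectors\<close>

lemma kron_carrier:
  "A \<in> carrier_mat d1 d1 \<Longrightarrow> B \<in> carrier_mat d2 d2 \<Longrightarrow> kron A B \<in> carrier_mat (d1 * d2) (d1 * d2)"
  unfolding kron_def carrier_mat_def by simp

lemma index_kron_block:
  assumes "A \<in> carrier_mat d1 d1" and "B \<in> carrier_mat d2 d2"
    and "a < d1" and "b < d2" and "c < d1" and "e < d2"
  shows "kron A B $$ (a * d2 + b, c * d2 + e) = A $$ (a, c) * B $$ (b, e)"
proof -
  have "x * d2 + y < d1 * d2" if "x < d1" "y < d2" for x y
  proof -
    have "x * d2 + y < Suc x * d2"
      using that by simp
    also have "\<dots> \<le> d1 * d2"
      using that by (intro mult_le_mono1) simp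
    finally show ?thesis .
  qed
  then show ?thesis
    unfolding kron_def using assms by simp
qed

lemma mtrace_kron_mult:
  fixes A P B Q :: "complex mat"
  assumes A: "A \<in> carrier_mat d1 d1" and P: "P \<in> carrier_mat d1 d1"
    and B: "B \<in> carrier_mat d2 d2" and Q: "Q \<in> carrier_mat d2 d2"
  shows "mtrace (kron A B * kron P Q) = mtrace (A * P) * mtrace (B * Q)"
proof -
  have "mtrace (kron A B * kron P Q)
      = (\<Sum>a<d1. \<Sum>b<d2. \<Sum>c<d1. \<Sum>e<d2. A $$ (a, c) * P $$ (c, a) * (B $$ (b, e) * Q $$ (e, b)))"
    using kron_carrier[OF A B] kron_carrier[OF P Q] A B P Q
    by (simp add: mtrace_mult_eq_sum sum_lessThan_mult index_kron_block mult_ac)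
  also have "\<dots> = (\<Sum>a<d1. \<Sum>c<d1. \<Sum>b<d2. \<Sum>e<d2. A $$ (a, c) * P $$ (c, a) * (B $$ (b, e) * Q $$ (e, b)))"
    by (rule sum.cong[OF refl], rule sum.swap)
  also have "\<dots> = (\<Sum>a<d1. \<Sum>c<d1. A $$ (a, c) * P $$ (c, a) * (\<Sum>b<d2. \<Sum>e<d2. B $$ (b, e) * Q $$ (e, b)))"
    by (simp only: sum_distrib_left)
  also have "\<dots> = (\<Sum>a<d1. \<Sum>c<d1. A $$ (a, c) * P $$ (c, a)) * (\<Sum>b<d2. \<Sum>e<d2. B $$ (b, e) * Q $$ (e, b))"
    by (simp only: sum_distrib_right)
  also have "\<dots> = mtrace (A * P) * mtrace (B * Q)"
    using mtrace_mult_eq_sum[OF A P] mtrace_mult_eq_sum[OF B Q] by simp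
  finally show ?thesis .
qed

lemma mtrace_sum_mat_mult:
  fixes F :: "nat \<Rightarrow> complex mat"
  assumes F: "\<And>k. k < m \<Longrightarrow> F k \<in> carrier_mat n n" and K: "K \<in> carrier_mat n n"
  shows "mtrace (mat n n (\<lambda>ij. \<Sum>k<m. c k * F k $$ ij) * K) = (\<Sum>k<m. c k * mtrace (F k * K))"
proof -
  have "mtrace (mat n n (\<lambda>ij. \<Sum>k<m. c k * F k $$ ij) * K)
      = (\<Sum>i<n. \<Sum>j<n. mat n n (\<lambda>ij. \<Sum>k<m. c k * F k $$ ij) $$ (i, j) * K $$ (j, i))"
    by (rule mtrace_mult_eq_sum) (use K in auto)
  also have "\<dots> = (\<Sum>i<n. \<Sum>j<n. (\<Sum>k<m. c k * F k $$ (i, j)) * K $$ (j, i))"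
    by (intro sum.cong refl) auto
  also have "\<dots> = (\<Sum>i<n. \<Sum>j<n. \<Sum>k<m. c k * (F k $$ (i, j) * K $$ (j, i)))"
    by (simp add: sum_distrib_right sum_distrib_left mult_ac)
  also have "\<dots> = (\<Sum>i<n. \<Sum>k<m. \<Sum>j<n. c k * (F k $$ (i, j) * K $$ (j, i)))"
    by (rule sum.cong[OF refl], rule sum.swap)
  also have "\<dots> = (\<Sum>k<m. \<Sum>i<n. \<Sum>j<n. c k * (F k $$ (i, j) * K $$ (j, i)))"
    by (rule sum.swap)
  also have "\<dots> = (\<Sum>k<m. c k * mtrace (F k * K))"
  proof (intro sum.cong refl)
    fix k assume "k \<in> {..<m}"
    then have "F k \<in> carrier_mat n n"
      using F by auto
    then show "(\<Sum>i<n. \<Sum>j<n. c k * (F k $$ (i, j) * K $$ (j, i))) = c k * mtrace (F k * K)"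
      using mtrace_mult_eq_sum[OF _ K] by (simp add: sum_distrib_left)
  qed
  finally show ?thesis .
qed

lemma mtrace_mixture_kron_mult:
  fixes P Q :: "complex mat" and A B :: "nat \<Rightarrow> complex mat" and p :: "nat \<Rightarrow> real"
  assumes rho: "\<rho> = mat (d1 * d2) (d1 * d2) (\<lambda>ij. \<Sum>k<m. complex_of_real (p k) * kron (A k) (B k) $$ ij)"
    and AB: "\<forall>k<m. A k \<in> carrier_mat d1 d1 \<and> B k \<in> carrier_mat d2 d2"
    and P: "P \<in> carrier_mat d1 d1" and Q: "Q \<in> carrier_mat d2 d2"
  shows "mtrace (\<rho> * kron P Q) = (\<Sum>k<m. complex_of_real (p k) * (mtrace (A k * P) * mtrace (B k * Q)))"
proof -
  have "mtrace (\<rho> * kron P Q) = (\<Sum>k<m. complex_of_real (p k) * mtrace (kron (A k) (B k) * kron P Q))"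
    unfolding rho using AB kron_carrier[OF P Q]
    by (intro mtrace_sum_mat_mult[where F = "\<lambda>k. kron (A k) (B k)" and c = "\<lambda>k. complex_of_real (p k)"])
      (auto intro: kron_carrier)
  also have "\<dots> = (\<Sum>k<m. complex_of_real (p k) * (mtrace (A k * P) * mtrace (B k * Q)))"
    using AB by (intro sum.cong refl) (simp add: mtrace_kron_mult[OF _ P _ Q])
  finally show ?thesis .
qed

lemma sum_entries_mult_cnj_hermitian:
  fixes X Y :: "complex mat"
  assumes X: "X \<in> carrier_mat d d" and Y: "Y \<in> carrier_mat d d" and "hermitian Y"
  shows "(\<Sum>p\<in>{..<d} \<times> {..<d}. X $$ p * cnj (Y $$ p)) = mtrace (X * Y)"
proof -
  have "cnj (Y $$ (a, b)) = Y $$ (b, a)" if "a < d" "b < d" for a b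
    using index_adjoint[of b Y a] \<open>hermitian Y\<close> Y that unfolding hermitian_def by auto
  then have "(\<Sum>a<d. \<Sum>b<d. X $$ (a, b) * cnj (Y $$ (a, b))) = (\<Sum>a<d. \<Sum>b<d. X $$ (a, b) * Y $$ (b, a))"
    by (intro sum.cong refl) auto
  then have "(\<Sum>p\<in>{..<d} \<times> {..<d}. X $$ p * cnj (Y $$ p)) = (\<Sum>a<d. \<Sum>b<d. X $$ (a, b) * Y $$ (b, a))"
    by (simp add: sum.cartesian_product)
  also have "\<dots> = mtrace (X * Y)"
    using mtrace_mult_eq_sum[OF X Y] by simp
  finally show ?thesis .
qed

lemma state_purity_le:
  assumes "is_state d A"
  shows "Re (mtrace (A * A)) \<le> 1"
proof -
  have "psd d A" and "mtrace A = 1"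
    using assms unfolding is_state_def by auto
  obtain U e where "unitary d U" and A: "A = U * real_diag_mat d e * mat_adjoint U" and e: "\<forall>i<d. e i \<ge> 0"
    using psd_spectral[OF \<open>psd d A\<close>] by blast
  have "complex_of_real (\<Sum>i<d. e i) = 1"
    using mtrace_unitary_conj_real_diag[OF \<open>unitary d U\<close>, of e] A \<open>mtrace A = 1\<close> by simp
  then have e1: "(\<Sum>i<d. e i) = 1"
    by (metis of_real_eq_1_iff)
  have "e i \<le> 1" if "i < d" for i
    using e that member_le_sum[of i "{..<d}" e] e1 by simp
  then have "(\<Sum>i<d. e i * e i) \<le> (\<Sum>i<d. e i)"
    using e by (intro sum_mono) (simp add: mult_left_le_one_le)
  moreover have "mtrace (A * A) = complex_of_real (\<Sum>i<d. e i * e i)"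
    unfolding A unitary_conj_real_diag_mult[OF \<open>unitary d U\<close>] mtrace_unitary_conj_real_diag[OF \<open>unitary d U\<close>] ..
  ultimately show ?thesis
    using e1 by simp
qed

lemma hermitian_orthogonal_bessel:
  fixes G :: "'i \<Rightarrow> complex mat" and c :: "'i \<Rightarrow> real"
  assumes "finite I"
    and G: "\<And>i. i \<in> I \<Longrightarrow> G i \<in> carrier_mat d d \<and> hermitian (G i)"
    and orth: "\<And>i l. i \<in> I \<Longrightarrow> l \<in> I \<Longrightarrow> mtrace (G i * G l) = (if i = l then complex_of_real (c i) else 0)"
    and c: "\<And>i. i \<in> I \<Longrightarrow> c i > 0"
    and A: "A \<in> carrier_mat d d" and "hermitian A"
  shows "(\<Sum>i\<in>I. (cmod (mtrace (A * G i)))\<^sup>2 / c i) \<le> Re (mtrace (A * A))"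
proof -
  define J where "J = {..<d} \<times> {..<d}"
  define f where "f i p = G i $$ p / complex_of_real (sqrt (c i))" for i p
  have "(\<Sum>p\<in>J. f i p * cnj (f l p)) = (if i = l then 1 else 0)" if "i \<in> I" "l \<in> I" for i l
  proof -
    have "(\<Sum>p\<in>J. f i p * cnj (f l p))
        = (\<Sum>p\<in>J. G i $$ p * cnj (G l $$ p)) / complex_of_real (sqrt (c i) * sqrt (c l))"
      unfolding f_def by (simp add: sum_divide_distrib)
    also have "\<dots> = mtrace (G i * G l) / complex_of_real (sqrt (c i) * sqrt (c l))"
      unfolding J_def using G that by (simp add: sum_entries_mult_cnj_hermitian)
    finally show ?thesis
      using orth[OF that] c[OF that(1)] c[OF that(2)] by (auto simp flip: of_real_mult)
  qed
  then have "(\<Sum>i\<in>I. (cmod (\<Sum>p\<in>J. A $$ p * cnj (f i p)))\<^sup>2) \<le> (\<Sum>p\<in>J. (cmod (A $$ p))\<^sup>2)"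
    by (intro bessel_inequality) (simp_all add: J_def \<open>finite I\<close>)
  moreover have "(cmod (\<Sum>p\<in>J. A $$ p * cnj (f i p)))\<^sup>2 = (cmod (mtrace (A * G i)))\<^sup>2 / c i" if "i \<in> I" for i
  proof -
    have "(\<Sum>p\<in>J. A $$ p * cnj (f i p)) = (\<Sum>p\<in>J. A $$ p * cnj (G i $$ p)) / complex_of_real (sqrt (c i))"
      unfolding f_def by (simp add: sum_divide_distrib)
    also have "\<dots> = mtrace (A * G i) / complex_of_real (sqrt (c i))"
      unfolding J_def using G that A by (simp add: sum_entries_mult_cnj_hermitian)
    finally show ?thesis
      using c[OF that] by (simp add: norm_divide power_divide)
  qed
  moreover have "(\<Sum>p\<in>J. (cmod (A $$ p))\<^sup>2) = Re (mtrace (A * A))"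
  proof -
    have "complex_of_real (\<Sum>p\<in>J. (cmod (A $$ p))\<^sup>2) = (\<Sum>p\<in>J. A $$ p * cnj (A $$ p))"
      by (simp only: of_real_sum complex_norm_square)
    also have "\<dots> = mtrace (A * A)"
      unfolding J_def by (rule sum_entries_mult_cnj_hermitian[OF A A \<open>hermitian A\<close>])
    finally show ?thesis
      by (metis Re_complex_of_real)
  qed
  ultimately show ?thesis
    by simp
qed

definition bloch_vec :: "(nat \<Rightarrow> complex mat) \<Rightarrow> complex mat \<Rightarrow> nat \<Rightarrow> complex" where
  "bloch_vec L A i = mtrace (A * L i) / 2"

text \<open>\<open>ext_bloch_vec d L A\<close> is the vector \<open>(1/d, r)\<close>: the canonical correlation matrix of a product
  state \<open>A \<otimes> B\<close> is the outer product of these vectors for \<open>A\<close> and \<open>B\<close>.\<close>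

definition ext_bloch_vec :: "nat \<Rightarrow> (nat \<Rightarrow> complex mat) \<Rightarrow> complex mat \<Rightarrow> nat \<Rightarrow> complex" where
  "ext_bloch_vec d L A i = (if i = 0 then 1 / of_nat d else bloch_vec L A (i - 1))"

lemma bloch_vec_norm_le:
  assumes "d \<ge> 1" and L: "su_generators d L" and A: "is_state d A"
  shows "(\<Sum>i<d^2 - 1. (cmod (bloch_vec L A i))\<^sup>2) \<le> real (d^2 - d) / (2 * real d^2)"
proof -
  define N where "N = d^2 - 1"
  define G where "G i = (if i < N then L i else 1\<^sub>m d)" for i
  define c where "c i = (if i < N then 2 else real d)" for i
  have L_gen: "L i \<in> carrier_mat d d" "hermitian (L i)" "mtrace (L i) = 0"
    "\<And>j. j < N \<Longrightarrow> mtrace (L i * L j) = (if i = j then 2 else 0)" if "i < N" for i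
    using L that unfolding su_generators_def N_def by auto
  have A_carrier: "A \<in> carrier_mat d d" and "hermitian A" and "mtrace A = 1"
    using A unfolding is_state_def psd_def by auto
  have "(\<Sum>i\<in>{..N}. (cmod (mtrace (A * G i)))\<^sup>2 / c i) \<le> Re (mtrace (A * A))"
  proof (rule hermitian_orthogonal_bessel[OF _ _ _ _ A_carrier \<open>hermitian A\<close>])
    show "G i \<in> carrier_mat d d \<and> hermitian (G i)" if "i \<in> {..N}" for i
      using L_gen by (simp add: G_def hermitian_def)
    show "mtrace (G i * G l) = (if i = l then complex_of_real (c i) else 0)" if "i \<in> {..N}" "l \<in> {..N}" for i l
      using that L_gen[of i] L_gen[of l]
      by (cases "i < N"; cases "l < N") (auto simp: G_def c_def right_mult_one_mat left_mult_one_mat)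
    show "c i > 0" for i
      using \<open>d \<ge> 1\<close> by (simp add: c_def)
  qed simp
  also have "\<dots> \<le> 1"
    by (rule state_purity_le[OF A])
  finally have S: "2 * (\<Sum>i<N. (cmod (bloch_vec L A i))\<^sup>2) + 1 / real d \<le> 1"
    using A_carrier \<open>mtrace A = 1\<close>
    by (simp add: lessThan_Suc_atMost[symmetric] G_def c_def bloch_vec_def norm_divide power_divide
        sum_distrib_left)
  then have "(\<Sum>i<N. (cmod (bloch_vec L A i))\<^sup>2) \<le> (1 - 1 / real d) / 2"
    by (simp add: field_simps)
  also have "\<dots> = real (d^2 - d) / (2 * real d^2)"
    using \<open>d \<ge> 1\<close> by (simp add: power2_eq_square field_simps)
  finally show ?thesis
    unfolding N_def .
qed

lemma ext_bloch_vec_norm_le: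
  assumes "d \<ge> 1" and "su_generators d L" and "is_state d A"
  shows "(\<Sum>i<d^2. (cmod (ext_bloch_vec d L A i))\<^sup>2) \<le> real (2 + d^2 - d) / (2 * real d^2)"
proof -
  define N where "N = d^2 - 1"
  have "d^2 = Suc N"
    using \<open>d \<ge> 1\<close> by (simp add: N_def)
  then have "(\<Sum>i<d^2. (cmod (ext_bloch_vec d L A i))\<^sup>2) = (\<Sum>i<Suc N. (cmod (ext_bloch_vec d L A i))\<^sup>2)"
    by (simp only:)
  also have "\<dots> = 1 / real d^2 + (\<Sum>i<N. (cmod (bloch_vec L A i))\<^sup>2)"
    unfolding sum.lessThan_Suc_shift by (simp add: ext_bloch_vec_def norm_divide power_divide)
  also have "\<dots> \<le> 1 / real d^2 + real (d^2 - d) / (2 * real d^2)"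
    using bloch_vec_norm_le[OF assms] by (simp add: N_def)
  also have "\<dots> = real (2 + d^2 - d) / (2 * real d^2)"
  proof -
    have "d \<le> d^2"
      by (simp add: power2_eq_square)
    then have "real (d^2 - d) = real d^2 - real d" and "real (2 + d^2 - d) = 2 + real d^2 - real d"
      by simp_all
    then show ?thesis
      using \<open>d \<ge> 1\<close> by (simp add: field_simps power2_eq_square)
  qed
  finally show ?thesis .
qed

lemma corr_mat_mixture:
  fixes p :: "nat \<Rightarrow> real"
  assumes \<rho>: "\<rho> = mat (d1 * d2) (d1 * d2) (\<lambda>ij. \<Sum>k<m. complex_of_real (p k) * kron (A k) (B k) $$ ij)"
    and AB: "\<forall>k<m. is_state d1 (A k) \<and> is_state d2 (B k)"
    and "su_generators d1 L1" and "su_generators d2 L2"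
    and "i < d1^2 - 1" and "j < d2^2 - 1"
  shows "corr_mat d1 d2 L1 L2 \<rho> $$ (i, j)
    = (\<Sum>k<m. complex_of_real (p k) * bloch_vec L1 (A k) i * bloch_vec L2 (B k) j)"
proof -
  have AB_carrier: "\<forall>k<m. A k \<in> carrier_mat d1 d1 \<and> B k \<in> carrier_mat d2 d2"
    using AB unfolding is_state_def psd_def by auto
  have "L1 i \<in> carrier_mat d1 d1" and "L2 j \<in> carrier_mat d2 d2"
    using assms unfolding su_generators_def by auto
  then show ?thesis
    using assms mtrace_mixture_kron_mult[OF \<rho> AB_carrier]
    by (simp add: corr_mat_def bloch_vec_def sum_divide_distrib mult_ac)
qed

lemma bloch_r_mixture:
  fixes p :: "nat \<Rightarrow> real"
  assumes \<rho>: "\<rho> = mat (d1 * d2) (d1 * d2) (\<lambda>ij. \<Sum>k<m. complex_of_real (p k) * kron (A k) (B k) $$ ij)"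
    and AB: "\<forall>k<m. is_state d1 (A k) \<and> is_state d2 (B k)"
    and "su_generators d1 L1" and "i < d1^2 - 1"
  shows "bloch_r d1 d2 L1 \<rho> i = (\<Sum>k<m. complex_of_real (p k) * bloch_vec L1 (A k) i * (1 / of_nat d2))"
proof -
  have AB_carrier: "\<forall>k<m. A k \<in> carrier_mat d1 d1 \<and> B k \<in> carrier_mat d2 d2"
    using AB unfolding is_state_def psd_def by auto
  have L: "L1 i \<in> carrier_mat d1 d1"
    using assms unfolding su_generators_def by auto
  have "bloch_r d1 d2 L1 \<rho> i
      = (\<Sum>k<m. complex_of_real (p k) * (mtrace (A k * L1 i) * mtrace (B k * 1\<^sub>m d2))) / (2 * of_nat d2)"
    unfolding bloch_r_def mtrace_mixture_kron_mult[OF \<rho> AB_carrier L one_carrier_mat] ..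
  also have "\<dots> = (\<Sum>k<m. complex_of_real (p k) * bloch_vec L1 (A k) i * (1 / of_nat d2))"
    unfolding sum_divide_distrib using AB_carrier AB
    by (intro sum.cong refl) (auto simp: is_state_def bloch_vec_def)
  finally show ?thesis .
qed

lemma bloch_s_mixture:
  fixes p :: "nat \<Rightarrow> real"
  assumes \<rho>: "\<rho> = mat (d1 * d2) (d1 * d2) (\<lambda>ij. \<Sum>k<m. complex_of_real (p k) * kron (A k) (B k) $$ ij)"
    and AB: "\<forall>k<m. is_state d1 (A k) \<and> is_state d2 (B k)"
    and "su_generators d2 L2" and "j < d2^2 - 1"
  shows "bloch_s d1 d2 L2 \<rho> j = (\<Sum>k<m. complex_of_real (p k) * (1 / of_nat d1) * bloch_vec L2 (B k) j)"
proof -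
  have AB_carrier: "\<forall>k<m. A k \<in> carrier_mat d1 d1 \<and> B k \<in> carrier_mat d2 d2"
    using AB unfolding is_state_def psd_def by auto
  have L: "L2 j \<in> carrier_mat d2 d2"
    using assms unfolding su_generators_def by auto
  have "bloch_s d1 d2 L2 \<rho> j
      = (\<Sum>k<m. complex_of_real (p k) * (mtrace (A k * 1\<^sub>m d1) * mtrace (B k * L2 j))) / (2 * of_nat d1)"
    unfolding bloch_s_def mtrace_mixture_kron_mult[OF \<rho> AB_carrier one_carrier_mat L] ..
  also have "\<dots> = (\<Sum>k<m. complex_of_real (p k) * (1 / of_nat d1) * bloch_vec L2 (B k) j)"
    unfolding sum_divide_distrib using AB_carrier AB
    by (intro sum.cong refl) (auto simp: is_state_def bloch_vec_def)
  finally show ?thesis .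
qed

lemma canon_corr_mat_mixture:
  fixes p :: "nat \<Rightarrow> real"
  assumes \<rho>: "\<rho> = mat (d1 * d2) (d1 * d2) (\<lambda>ij. \<Sum>k<m. complex_of_real (p k) * kron (A k) (B k) $$ ij)"
    and AB: "\<forall>k<m. is_state d1 (A k) \<and> is_state d2 (B k)" and p: "(\<Sum>k<m. p k) = 1"
    and L1: "su_generators d1 L1" and L2: "su_generators d2 L2"
    and i: "i < d1^2" and j: "j < d2^2"
  shows "canon_corr_mat d1 d2 L1 L2 \<rho> $$ (i, j)
    = (\<Sum>k<m. complex_of_real (p k) * ext_bloch_vec d1 L1 (A k) i * ext_bloch_vec d2 L2 (B k) j)"
proof -
  have entry: "canon_corr_mat d1 d2 L1 L2 \<rho> $$ (i, j) =
      (if i = 0 \<and> j = 0 then 1 / (of_nat d1 * of_nat d2)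
       else if i = 0 then bloch_s d1 d2 L2 \<rho> (j - 1)
       else if j = 0 then bloch_r d1 d2 L1 \<rho> (i - 1)
       else corr_mat d1 d2 L1 L2 \<rho> $$ (i - 1, j - 1))"
    unfolding canon_corr_mat_def using i j by simp
  have "(\<Sum>k<m. complex_of_real (p k)) = 1"
    using p by (metis of_real_1 of_real_sum)
  then have "1 / (of_nat d1 * of_nat d2) = (\<Sum>k<m. complex_of_real (p k) * (1 / of_nat d1) * (1 / of_nat d2))"
    by (simp flip: sum_divide_distrib)
  moreover have "i \<noteq> 0 \<Longrightarrow> i - 1 < d1^2 - 1" and "j \<noteq> 0 \<Longrightarrow> j - 1 < d2^2 - 1"
    using i j by auto
  ultimately show ?thesis
    using entry bloch_r_mixture[OF \<rho> AB L1] bloch_s_mixture[OF \<rho> AB L2] corr_mat_mixture[OF \<rho> AB L1 L2]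
    by (simp add: ext_bloch_vec_def)
qed

lemma sqrt_div_mult_sqrt_div:
  fixes a b u v :: real
  assumes "a > 0" and "b > 0"
  shows "sqrt (u / (2 * a^2)) * sqrt (v / (2 * b^2)) = sqrt (u * v) / (2 * a * b)"
proof -
  have "sqrt (u / (2 * a^2)) * sqrt (v / (2 * b^2)) = sqrt (u * v / (2 * a * b)^2)"
    by (simp add: real_sqrt_mult[symmetric] field_simps)
  also have "\<dots> = sqrt (u * v) / (2 * a * b)"
    using assms by (simp add: real_sqrt_divide)
  finally show ?thesis .
qed

theorem theorem1:
  fixes d1 d2 :: nat and L1 L2 :: "nat \<Rightarrow> complex mat" and \<rho> :: "complex mat"
  assumes "d1 \<ge> 2" and "d2 \<ge> 2"
    and "su_generators d1 L1" and "su_generators d2 L2"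
    and "is_state (d1 * d2) \<rho>"
    and "separable d1 d2 \<rho>"
  shows "(tr_half_pow (corr_mat d1 d2 L1 L2 \<rho>) 2)^2
           \<le> sqrt (real ((d1^2 - d1) * (d2^2 - d2))) / (2 * real d1 * real d2)
             * tr_half_pow (corr_mat d1 d2 L1 L2 \<rho>) 3
       \<and> (tr_half_pow (canon_corr_mat d1 d2 L1 L2 \<rho>) 2)^2
           \<le> sqrt (real ((2 + d1^2 - d1) * (2 + d2^2 - d2))) / (2 * real d1 * real d2)
             * tr_half_pow (canon_corr_mat d1 d2 L1 L2 \<rho>) 3"
proof -
  obtain m :: nat and p :: "nat \<Rightarrow> real" and A B :: "nat \<Rightarrow> complex mat" where AB: "\<forall>k<m. 0 \<le> p k \<and> is_state d1 (A k) \<and> is_state d2 (B k)"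
    and p: "(\<Sum>k<m. p k) = 1"
    and \<rho>: "\<rho> = mat (d1 * d2) (d1 * d2) (\<lambda>ij. \<Sum>k<m. complex_of_real (p k) * kron (A k) (B k) $$ ij)"
    using \<open>separable d1 d2 \<rho>\<close> unfolding separable_def by blast
  have states: "\<forall>k<m. is_state d1 (A k) \<and> is_state d2 (B k)"
    using AB by blast
  have d: "d1 \<ge> 1" "d2 \<ge> 1" "real d1 > 0" "real d2 > 0"
    using assms(1,2) by auto
  have "(tr_half_pow (corr_mat d1 d2 L1 L2 \<rho>) 2)^2
      \<le> sqrt (real (d1^2 - d1) / (2 * real d1^2)) * sqrt (real (d2^2 - d2) / (2 * real d2^2))
        * tr_half_pow (corr_mat d1 d2 L1 L2 \<rho>) 3"
    by (rule tr_half_pow_squared_le_mixture[where x = "\<lambda>k. bloch_vec L1 (A k)" and y = "\<lambda>k. bloch_vec L2 (B k)"])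
      (use AB p states d corr_mat_mixture[OF \<rho> states assms(3,4)] bloch_vec_norm_le assms(3,4)
        in \<open>auto simp: corr_mat_def\<close>)
  moreover have "(tr_half_pow (canon_corr_mat d1 d2 L1 L2 \<rho>) 2)^2
      \<le> sqrt (real (2 + d1^2 - d1) / (2 * real d1^2)) * sqrt (real (2 + d2^2 - d2) / (2 * real d2^2))
        * tr_half_pow (canon_corr_mat d1 d2 L1 L2 \<rho>) 3"
    by (rule tr_half_pow_squared_le_mixture[where x = "\<lambda>k. ext_bloch_vec d1 L1 (A k)" and y = "\<lambda>k. ext_bloch_vec d2 L2 (B k)"])
      (use AB p states d canon_corr_mat_mixture[OF \<rho> states p assms(3,4)] ext_bloch_vec_norm_le assms(3,4)
        in \<open>auto simp: canon_corr_mat_def\<close>)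
  ultimately show ?thesis
    using d by (simp add: sqrt_div_mult_sqrt_div)
qed

end
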